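(* Let $0<\epsilon,\delta,\lambda<1$, $F=1-\epsilon$, $\nu=1-\lambda$, $k_+=\lceil\log_\lambda\delta\rceil$, $k_-=\lfloor\log_\lambda\delta\rfloor$, and for nonnegative integers $k$ define $$\tilde N(\epsilon,\delta,\lambda,k)=\frac{k\nu^2\delta F+\lambda^{k+1}+\lambda\delta(k\nu-1)}{\lambda\nu\delta\epsilon},\qquad \tilde N_\pm(\epsilon,\delta,\lambda)=\tilde N(\epsilon,\delta,\lambda,k_\pm).$$ Then $$N(\epsilon,\delta,\lambda)=\Big\lceil\min_{k\in\mathbb Z_{\ge0}}\tilde N(\epsilon,\delta,\lambda,k)\Big\rceil=\lceil\tilde N(\epsilon,\delta,\lambda,k^* )\rceil=\big\lceil\min\{\tilde N_+(\epsilon,\delta,\lambda),\tilde N_-(\epsilon,\delta,\lambda)\}\big\rceil=\begin{cases}\lceil\tilde N_-(\epsilon,\delta,\lambda)\rceil,&\delta\ge\frac{\lambda^{k_+}}{F+\lambda\epsilon},\\ \lceil\tilde N_+(\epsilon,\delta,\lambda)\rceil,&\delta\le\frac{\lambda^{k_+}}{F+\lambda\epsilon},\end{cases}$$ where $k^*$ is the largest integer $k$ satisfying $\delta\le\lambda^k/(F\nu+\lambda)=\lambda^k/(F+\lambda\epsilon)$, and $k^*$ is equal to either $k_+$ or $k_-$.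
   Context: Let $\mathcal H$ be a Hilbert space of finite dimension $D\ge 2$ and $|\Psi\rangle\in\mathcal H$ a unit vector. For $0\le\lambda<1$ let $\Omega_\lambda=|\Psi\rangle\langle\Psi|+\lambda(1-|\Psi\rangle\langle\Psi|)$. For an integer $N\ge1$ and a density operator $\rho$ on $\mathcal H^{\otimes(N+1)}$ put $p_\rho=\mathrm{tr}[(\Omega_\lambda^{\otimes N}\otimes 1)\rho]$ and $f_\rho=\mathrm{tr}[(\Omega_\lambda^{\otimes N}\otimes|\Psi\rangle\langle\Psi|)\rho]$. Define $F(N,\delta,\lambda)=\min\{f_\rho/p_\rho: p_\rho\ge\delta\}$ for $0<\delta\le1$, the minimum over permutation-invariant density operators on $\mathcal H^{\otimes(N+1)}$, and for $0<\epsilon,\delta<1$ let $N(\epsilon,\delta,\lambda)=\min\{N\ge1: F(N,\delta,\lambda)\ge1-\epsilon\}$ (the minimum number of tests needed to verify $|\Psi\rangle$ within infidelity $\epsilon$ and significance level $\delta$ in the adversarial scenario). *)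

theory Defs
  imports "HOL-Analysis.Analysis" "HOL-Combinatorics.Permutations"
begin

text \<open>Concrete model: \<H> = \<complex>^D with basis indexed by {..<D}; the space
  \<H>^(tensor n) has basis indexed by lists of length n over {..<D}.
  Operators on \<H>^(tensor n) are represented by their matrix entries
  (functions of two basis indices).\<close>

definition idx :: "nat \<Rightarrow> nat \<Rightarrow> nat list set" where
  "idx D n = {xs. length xs = n \<and> set xs \<subseteq> {..<D}}"

definition trAB :: "nat \<Rightarrow> nat \<Rightarrow> (nat list \<Rightarrow> nat list \<Rightarrow> complex)
   \<Rightarrow> (nat list \<Rightarrow> nat list \<Rightarrow> complex) \<Rightarrow> complex" where
  "trAB D n A \<rho> = (\<Sum>x\<in>idx D n. \<Sum>y\<in>idx D n. A x y * \<rho> y x)"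

definition density_op :: "nat \<Rightarrow> nat \<Rightarrow> (nat list \<Rightarrow> nat list \<Rightarrow> complex) \<Rightarrow> bool" where
  "density_op D n \<rho> \<longleftrightarrow>
     (\<forall>v :: nat list \<Rightarrow> complex.
        (\<Sum>x\<in>idx D n. \<Sum>y\<in>idx D n. cnj (v x) * \<rho> x y * v y) \<in> \<real> \<and>
        0 \<le> Re (\<Sum>x\<in>idx D n. \<Sum>y\<in>idx D n. cnj (v x) * \<rho> x y * v y)) \<and>
     (\<Sum>x\<in>idx D n. \<rho> x x) = 1"

definition perm_idx :: "nat \<Rightarrow> (nat \<Rightarrow> nat) \<Rightarrow> nat list \<Rightarrow> nat list" where
  "perm_idx n \<sigma> xs = map (\<lambda>i. xs ! \<sigma> i) [0..<n]"

definition perm_inv :: "nat \<Rightarrow> nat \<Rightarrow> (nat list \<Rightarrow> nat list \<Rightarrow> complex) \<Rightarrow> bool" where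
  "perm_inv D n \<rho> \<longleftrightarrow>
     (\<forall>\<sigma>. \<sigma> permutes {..<n} \<longrightarrow>
        (\<forall>x\<in>idx D n. \<forall>y\<in>idx D n. \<rho> (perm_idx n \<sigma> x) (perm_idx n \<sigma> y) = \<rho> x y))"

definition proj :: "(nat \<Rightarrow> complex) \<Rightarrow> nat \<Rightarrow> nat \<Rightarrow> complex" where
  "proj \<Psi> i j = \<Psi> i * cnj (\<Psi> j)"

definition Omega :: "(nat \<Rightarrow> complex) \<Rightarrow> real \<Rightarrow> nat \<Rightarrow> nat \<Rightarrow> complex" where
  "Omega \<Psi> lam i j = proj \<Psi> i j + of_real lam * ((if i = j then 1 else 0) - proj \<Psi> i j)"

definition test_op :: "(nat \<Rightarrow> complex) \<Rightarrow> real \<Rightarrow> nat \<Rightarrow> (nat \<Rightarrow> nat \<Rightarrow> complex)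
    \<Rightarrow> nat list \<Rightarrow> nat list \<Rightarrow> complex" where
  "test_op \<Psi> lam N B x y = (\<Prod>i<N. Omega \<Psi> lam (x ! i) (y ! i)) * B (x ! N) (y ! N)"

definition p_rho :: "nat \<Rightarrow> (nat \<Rightarrow> complex) \<Rightarrow> real \<Rightarrow> nat \<Rightarrow> (nat list \<Rightarrow> nat list \<Rightarrow> complex) \<Rightarrow> real" where
  "p_rho D \<Psi> lam N \<rho> = Re (trAB D (N+1) (test_op \<Psi> lam N (\<lambda>i j. if i = j then 1 else 0)) \<rho>)"

definition f_rho :: "nat \<Rightarrow> (nat \<Rightarrow> complex) \<Rightarrow> real \<Rightarrow> nat \<Rightarrow> (nat list \<Rightarrow> nat list \<Rightarrow> complex) \<Rightarrow> real" where
  "f_rho D \<Psi> lam N \<rho> = Re (trAB D (N+1) (test_op \<Psi> lam N (proj \<Psi>)) \<rho>)"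

text \<open>F(N,delta,lambda): the minimum (written as infimum) over permutation-invariant
  density operators with p_rho \<ge> delta\<close>
definition Fver :: "nat \<Rightarrow> (nat \<Rightarrow> complex) \<Rightarrow> nat \<Rightarrow> real \<Rightarrow> real \<Rightarrow> real" where
  "Fver D \<Psi> N \<delta> lam = Inf {f_rho D \<Psi> lam N \<rho> / p_rho D \<Psi> lam N \<rho> | \<rho>.
      density_op D (N+1) \<rho> \<and> perm_inv D (N+1) \<rho> \<and> p_rho D \<Psi> lam N \<rho> \<ge> \<delta>}"

definition Nver :: "nat \<Rightarrow> (nat \<Rightarrow> complex) \<Rightarrow> real \<Rightarrow> real \<Rightarrow> real \<Rightarrow> nat" where
  "Nver D \<Psi> \<epsilon> \<delta> lam = (LEAST N. N \<ge> 1 \<and> Fver D \<Psi> N \<delta> lam \<ge> 1 - \<epsilon>)"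

definition Ntil :: "real \<Rightarrow> real \<Rightarrow> real \<Rightarrow> nat \<Rightarrow> real" where
  "Ntil \<epsilon> \<delta> lam k =
     (real k * (1 - lam)^2 * \<delta> * (1 - \<epsilon>) + lam ^ (k+1) + lam * \<delta> * (real k * (1 - lam) - 1))
     / (lam * (1 - lam) * \<delta> * \<epsilon>)"

end

theory Submission
  imports Defs
begin

text \<open>Expanding every factor \<open>\<Omega>\<^sub>\<lambda> = |\<Psi>\<rangle>\<langle>\<Psi>| + \<lambda> (1 - |\<Psi>\<rangle>\<langle>\<Psi>|)\<close> expresses \<open>p\<^sub>\<rho>\<close> and \<open>f\<^sub>\<rho>\<close>
  through the weights of \<open>\<rho>\<close> on the projectors that are \<open>1 - |\<Psi>\<rangle>\<langle>\<Psi>|\<close> on a set \<open>S\<close> of factors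
  and \<open>|\<Psi>\<rangle>\<langle>\<Psi>|\<close> on the others. For a permutation-invariant \<open>\<rho>\<close> only the distribution \<open>c\<close> of
  \<open>|S|\<close> matters, and every distribution on \<open>{0..N+1}\<close> arises from a permutation-invariant
  mixture of product states. Hence \<open>F(N,\<delta>,\<lambda>) \<ge> 1 - \<epsilon>\<close> becomes a statement about a linear
  program over \<open>c\<close>. The points \<open>(p\<^sub>j, m\<^sub>j)\<close> describing \<open>p\<^sub>\<rho>\<close> and \<open>f\<^sub>\<rho> - (1 - \<epsilon>) p\<^sub>\<rho>\<close>
  form a convex chain, so the program is decided by a chord through two consecutive points,
  and the value of the chord through the points \<open>k, k + 1\<close> has the sign of \<open>N - Ntil k\<close>.
  Finally \<open>Ntil (k + 1) - Ntil k\<close> has the sign of \<open>\<delta> (F + \<lambda> \<epsilon>) - \<lambda>\<^bsup>k+1\<^esup>\<close>, so \<open>Ntil\<close> is minimal at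
  \<open>k\<^sup>*\<close>, which lies between \<open>\<lfloor>log\<^sub>\<lambda> \<delta>\<rfloor>\<close> and \<open>\<lceil>log\<^sub>\<lambda> \<delta>\<rceil>\<close>.\<close>

section \<open>Minimising \<^const>\<open>Ntil\<close> over \<open>k\<close>\<close>

lemma min_at_sign_change_nat:
  fixes f :: "nat \<Rightarrow> 'a::preorder"
  assumes dec: "\<And>k. k < m \<Longrightarrow> f (Suc k) \<le> f k"
    and inc: "\<And>k. m \<le> k \<Longrightarrow> f k \<le> f (Suc k)"
  shows "f m \<le> f k"
proof (cases "m \<le> k")
  case True
  then show ?thesis
  proof (induction k rule: dec_induct)
    case (step n)
    then show ?case using inc order_trans by blast
  qed simp
next
  case False
  then have "k \<le> m" by simp
  then show ?thesis
  proof (induction k rule: inc_induct)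
    case (step n)
    then show ?case using dec order_trans by blast
  qed simp
qed

lemma le_power_iff_le_Greatest:
  fixes a lam :: real
  assumes "0 < lam" "lam < 1" "0 < a" "a \<le> 1"
  shows "a \<le> lam ^ j \<longleftrightarrow> j \<le> (GREATEST k. a \<le> lam ^ k)"
proof -
  obtain n where n: "lam ^ n < a" using real_arch_pow_inv[OF assms(3,2)] by blast
  have bound: "k \<le> n" if "a \<le> lam ^ k" for k
  proof (rule ccontr)
    assume "\<not> k \<le> n"
    then have "lam ^ k \<le> lam ^ n" using assms by (intro power_decreasing) auto
    then show False using n that by simp
  qed
  have "a \<le> lam ^ 0" using assms by simp
  then have greatest: "a \<le> lam ^ (GREATEST k. a \<le> lam ^ k)"
    by (rule GreatestI_nat[where b = n]) (use bound in blast)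
  show ?thesis
  proof
    show "a \<le> lam ^ j \<Longrightarrow> j \<le> (GREATEST k. a \<le> lam ^ k)"
      using bound by (blast intro: Greatest_le_nat[where b = n])
    assume "j \<le> (GREATEST k. a \<le> lam ^ k)"
    then have "lam ^ (GREATEST k. a \<le> lam ^ k) \<le> lam ^ j"
      using assms by (intro power_decreasing) auto
    then show "a \<le> lam ^ j" using greatest by simp
  qed
qed

lemma power_log_bounds:
  fixes lam \<delta> :: real
  assumes "0 < lam" "lam < 1" "0 < \<delta>" "\<delta> \<le> 1"
  shows "lam ^ nat \<lceil>log lam \<delta>\<rceil> \<le> \<delta>" "\<delta> \<le> lam ^ nat \<lfloor>log lam \<delta>\<rfloor>"
    and "nat \<lceil>log lam \<delta>\<rceil> \<le> Suc (nat \<lfloor>log lam \<delta>\<rfloor>)"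
proof -
  define L where "L = log lam \<delta>"
  have "0 \<le> L" unfolding L_def using assms by (simp add: log_def divide_nonpos_neg)
  then have ceil: "L \<le> real (nat \<lceil>L\<rceil>)" and floor: "real (nat \<lfloor>L\<rfloor>) \<le> L" by linarith+
  have "lam powr L = \<delta>" unfolding L_def using assms by simp
  then have "lam ^ k = lam powr real k" and "\<delta> = lam powr L" for k
    using assms by (simp_all add: powr_realpow)
  then show "lam ^ nat \<lceil>log lam \<delta>\<rceil> \<le> \<delta>" "\<delta> \<le> lam ^ nat \<lfloor>log lam \<delta>\<rfloor>"
    unfolding L_def[symmetric] using ceil floor assms by (auto intro: powr_mono')
  show "nat \<lceil>log lam \<delta>\<rceil> \<le> Suc (nat \<lfloor>log lam \<delta>\<rfloor>)"
    unfolding L_def[symmetric] using \<open>0 \<le> L\<close> by linarith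
qed

lemma Ntil_Suc_diff:
  assumes "0 < \<epsilon>" "0 < \<delta>" "0 < lam" "lam < 1"
  shows "Ntil \<epsilon> \<delta> lam (Suc k) - Ntil \<epsilon> \<delta> lam k
       = (\<delta> * ((1 - \<epsilon>) + lam * \<epsilon>) - lam ^ Suc k) / (lam * \<delta> * \<epsilon>)"
proof -
  have "Ntil \<epsilon> \<delta> lam (Suc k) - Ntil \<epsilon> \<delta> lam k
     = ((1 - lam) * (\<delta> * ((1 - \<epsilon>) + lam * \<epsilon>) - lam ^ Suc k)) / (lam * (1 - lam) * \<delta> * \<epsilon>)"
    unfolding Ntil_def diff_divide_distrib[symmetric]
    by (rule arg_cong[where f = "\<lambda>x. x / _"]) (simp add: algebra_simps power2_eq_square)
  then show ?thesis using assms by simp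
qed

lemma Ntil_minimal:
  assumes "0 < \<epsilon>" "0 < \<delta>" "0 < lam" "lam < 1"
    and "\<delta> * ((1 - \<epsilon>) + lam * \<epsilon>) \<le> lam ^ m" "lam ^ Suc m < \<delta> * ((1 - \<epsilon>) + lam * \<epsilon>)"
  shows "Ntil \<epsilon> \<delta> lam m \<le> Ntil \<epsilon> \<delta> lam k"
proof (rule min_at_sign_change_nat)
  fix k
  have diff: "Ntil \<epsilon> \<delta> lam (Suc k) - Ntil \<epsilon> \<delta> lam k
      = (\<delta> * ((1 - \<epsilon>) + lam * \<epsilon>) - lam ^ Suc k) / (lam * \<delta> * \<epsilon>)"
    by (rule Ntil_Suc_diff[OF assms(1-4)])
  have "0 < lam * \<delta> * \<epsilon>" using assms by simp
  show "Ntil \<epsilon> \<delta> lam (Suc k) \<le> Ntil \<epsilon> \<delta> lam k" if "k < m"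
  proof -
    have "lam ^ m \<le> lam ^ Suc k" using that assms by (intro power_decreasing) auto
    then have "(\<delta> * ((1 - \<epsilon>) + lam * \<epsilon>) - lam ^ Suc k) / (lam * \<delta> * \<epsilon>) \<le> 0"
      using \<open>0 < lam * \<delta> * \<epsilon>\<close> assms(5) by (intro divide_nonpos_pos) auto
    then show ?thesis using diff by simp
  qed
  show "Ntil \<epsilon> \<delta> lam k \<le> Ntil \<epsilon> \<delta> lam (Suc k)" if "m \<le> k"
  proof -
    have "lam ^ Suc k \<le> lam ^ Suc m" using that assms by (intro power_decreasing) auto
    then have "0 \<le> (\<delta> * ((1 - \<epsilon>) + lam * \<epsilon>) - lam ^ Suc k) / (lam * \<delta> * \<epsilon>)"
      using \<open>0 < lam * \<delta> * \<epsilon>\<close> assms(6) by (intro divide_nonneg_pos) auto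
    then show ?thesis using diff by simp
  qed
qed

lemma Ntil_pos:
  assumes "0 < \<epsilon>" "\<epsilon> < 1" "0 < \<delta>" "\<delta> < 1" "0 < lam" "lam < 1"
    and k: "\<delta> * ((1 - \<epsilon>) + lam * \<epsilon>) \<le> lam ^ k"
  shows "0 < Ntil \<epsilon> \<delta> lam k"
proof -
  define c where "c = (1 - \<epsilon>) + lam * \<epsilon>"
  have "c - lam = (1 - lam) * (1 - \<epsilon>)" unfolding c_def by (simp add: algebra_simps)
  moreover have "0 < (1 - lam) * (1 - \<epsilon>)" using assms by simp
  ultimately have "lam < c" by linarith
  have "lam * \<delta> < real k * (1 - lam) * \<delta> * c + lam ^ Suc k"
  proof (cases k)
    case 0
    then show ?thesis using assms by simp
  next
    case (Suc k')
    have "0 \<le> (1 - lam) * (\<delta> * c)" using \<open>lam < c\<close> assms by simp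
    then have mono: "(1 - lam) * (\<delta> * c) \<le> real k * ((1 - lam) * (\<delta> * c))"
      using Suc mult_right_mono[of 1 "real k"] by simp
    have "lam * \<delta> < \<delta> * c" using \<open>lam < c\<close> assms by simp
    also have "\<dots> = (1 - lam) * (\<delta> * c) + lam * (\<delta> * c)" by algebra
    also have "\<dots> \<le> real k * (1 - lam) * \<delta> * c + lam * (\<delta> * c)"
      using mono by (simp add: mult.assoc)
    also have "\<dots> \<le> real k * (1 - lam) * \<delta> * c + lam ^ Suc k"
      using k assms unfolding c_def by simp
    finally show ?thesis .
  qed
  moreover have "Ntil \<epsilon> \<delta> lam k
      = (real k * (1 - lam) * \<delta> * c + lam ^ Suc k - lam * \<delta>) / (lam * (1 - lam) * \<delta> * \<epsilon>)"
    unfolding Ntil_def c_def by (simp add: algebra_simps power2_eq_square)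
  ultimately show ?thesis using assms by simp
qed

definition opt_index :: "real \<Rightarrow> real \<Rightarrow> real \<Rightarrow> nat" where
  "opt_index \<epsilon> \<delta> lam = (GREATEST k. \<delta> \<le> lam ^ k / ((1 - \<epsilon>) + lam * \<epsilon>))"

context
  fixes \<epsilon> \<delta> lam :: real
  assumes eps: "0 < \<epsilon>" "\<epsilon> < 1" and delta: "0 < \<delta>" "\<delta> < 1" and lam: "0 < lam" "lam < 1"
begin

lemma fidelity_factor_bounds: "lam < (1 - \<epsilon>) + lam * \<epsilon>" "(1 - \<epsilon>) + lam * \<epsilon> < 1"
proof -
  have "0 < (1 - lam) * (1 - \<epsilon>)" "0 < (1 - lam) * \<epsilon>" using eps lam by simp_all
  then show "lam < (1 - \<epsilon>) + lam * \<epsilon>" "(1 - \<epsilon>) + lam * \<epsilon> < 1"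
    by (simp_all add: algebra_simps)
qed

lemma le_power_div_iff: "\<delta> \<le> lam ^ j / ((1 - \<epsilon>) + lam * \<epsilon>) \<longleftrightarrow> \<delta> * ((1 - \<epsilon>) + lam * \<epsilon>) \<le> lam ^ j"
  using fidelity_factor_bounds lam by (simp add: pos_le_divide_eq)

lemma le_opt_index_iff: "\<delta> * ((1 - \<epsilon>) + lam * \<epsilon>) \<le> lam ^ j \<longleftrightarrow> j \<le> opt_index \<epsilon> \<delta> lam"
proof -
  have "0 < \<delta> * ((1 - \<epsilon>) + lam * \<epsilon>)" "\<delta> * ((1 - \<epsilon>) + lam * \<epsilon>) \<le> 1"
    using fidelity_factor_bounds lam delta by (simp_all add: mult_le_one)
  then show ?thesis
    unfolding opt_index_def le_power_div_iff using lam by (rule le_power_iff_le_Greatest[rotated 2])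
qed

lemma Ntil_opt_index_le: "Ntil \<epsilon> \<delta> lam (opt_index \<epsilon> \<delta> lam) \<le> Ntil \<epsilon> \<delta> lam k"
proof (rule Ntil_minimal)
  show "\<delta> * ((1 - \<epsilon>) + lam * \<epsilon>) \<le> lam ^ opt_index \<epsilon> \<delta> lam"
    by (simp add: le_opt_index_iff)
  show "lam ^ Suc (opt_index \<epsilon> \<delta> lam) < \<delta> * ((1 - \<epsilon>) + lam * \<epsilon>)"
    using le_opt_index_iff[of "Suc (opt_index \<epsilon> \<delta> lam)"] by linarith
qed (use eps delta lam in auto)

lemma Ntil_opt_index_pos: "0 < Ntil \<epsilon> \<delta> lam (opt_index \<epsilon> \<delta> lam)"
  using eps delta lam by (intro Ntil_pos) (auto simp: le_opt_index_iff)

lemma INF_Ntil: "(INF k. Ntil \<epsilon> \<delta> lam k) = Ntil \<epsilon> \<delta> lam (opt_index \<epsilon> \<delta> lam)"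
  using Ntil_opt_index_le by (intro antisym cINF_greatest cINF_lower bdd_belowI) auto

lemma floor_log_le_opt_index: "nat \<lfloor>log lam \<delta>\<rfloor> \<le> opt_index \<epsilon> \<delta> lam"
proof -
  have "\<delta> * ((1 - \<epsilon>) + lam * \<epsilon>) \<le> \<delta>"
    using fidelity_factor_bounds delta by (simp add: mult_left_le)
  also have "\<dots> \<le> lam ^ nat \<lfloor>log lam \<delta>\<rfloor>" using power_log_bounds lam delta by simp
  finally show ?thesis by (simp add: le_opt_index_iff)
qed

lemma opt_index_le_ceiling_log: "opt_index \<epsilon> \<delta> lam \<le> nat \<lceil>log lam \<delta>\<rceil>"
proof -
  have "lam ^ Suc (nat \<lceil>log lam \<delta>\<rceil>) \<le> lam * \<delta>"
    using power_log_bounds lam delta by (simp add: mult_left_mono)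
  also have "\<dots> < \<delta> * ((1 - \<epsilon>) + lam * \<epsilon>)" using fidelity_factor_bounds delta by simp
  finally show ?thesis using le_opt_index_iff[of "Suc (nat \<lceil>log lam \<delta>\<rceil>)"] by simp
qed

lemma opt_index_cases: "opt_index \<epsilon> \<delta> lam = nat \<lceil>log lam \<delta>\<rceil> \<or> opt_index \<epsilon> \<delta> lam = nat \<lfloor>log lam \<delta>\<rfloor>"
  using floor_log_le_opt_index opt_index_le_ceiling_log power_log_bounds(3) lam delta by linarith

lemma min_Ntil_log_eq:
  "min (Ntil \<epsilon> \<delta> lam (nat \<lceil>log lam \<delta>\<rceil>)) (Ntil \<epsilon> \<delta> lam (nat \<lfloor>log lam \<delta>\<rfloor>)) = Ntil \<epsilon> \<delta> lam (opt_index \<epsilon> \<delta> lam)"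
  using opt_index_cases Ntil_opt_index_le by (metis min.absorb1 min.absorb2)

lemma opt_index_eq_ceiling_log:
  assumes "\<delta> \<le> lam ^ nat \<lceil>log lam \<delta>\<rceil> / ((1 - \<epsilon>) + lam * \<epsilon>)"
  shows "opt_index \<epsilon> \<delta> lam = nat \<lceil>log lam \<delta>\<rceil>"
proof (rule antisym)
  show "nat \<lceil>log lam \<delta>\<rceil> \<le> opt_index \<epsilon> \<delta> lam"
    using assms unfolding le_power_div_iff le_opt_index_iff .
qed (rule opt_index_le_ceiling_log)

text \<open>In the boundary case \<open>lam ^ Suc k = \<delta> ((1 - \<epsilon>) + lam \<epsilon>)\<close>, so \<open>Ntil\<close> takes the same value at
  \<open>k\<close> and \<open>k + 1\<close> (see \<open>Ntil_Suc_diff\<close>).\<close>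
lemma Ntil_floor_log_eq_opt_index:
  assumes "lam ^ nat \<lceil>log lam \<delta>\<rceil> / ((1 - \<epsilon>) + lam * \<epsilon>) \<le> \<delta>"
  shows "Ntil \<epsilon> \<delta> lam (nat \<lfloor>log lam \<delta>\<rfloor>) = Ntil \<epsilon> \<delta> lam (opt_index \<epsilon> \<delta> lam)"
proof (cases "opt_index \<epsilon> \<delta> lam = nat \<lfloor>log lam \<delta>\<rfloor>")
  case False
  define km where "km = nat \<lfloor>log lam \<delta>\<rfloor>"
  have opt: "opt_index \<epsilon> \<delta> lam = Suc km" "nat \<lceil>log lam \<delta>\<rceil> = Suc km"
    using False opt_index_cases floor_log_le_opt_index power_log_bounds(3) lam delta
    unfolding km_def by linarith+
  have "lam ^ Suc km \<le> \<delta> * ((1 - \<epsilon>) + lam * \<epsilon>)"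
    using assms fidelity_factor_bounds lam opt(2) by (simp add: divide_le_eq mult.commute)
  then have "lam ^ Suc km = \<delta> * ((1 - \<epsilon>) + lam * \<epsilon>)"
    using le_opt_index_iff[of "Suc km"] opt(1) by simp
  then show ?thesis using Ntil_Suc_diff[of \<epsilon> \<delta> lam km] eps delta lam opt(1) unfolding km_def by simp
qed simp

lemma int_le_opt_index:
  fixes k :: int
  assumes "\<delta> \<le> lam powr real_of_int k / ((1 - \<epsilon>) + lam * \<epsilon>)"
  shows "k \<le> int (opt_index \<epsilon> \<delta> lam)"
proof (cases "k \<le> 0")
  case False
  then have "lam powr real_of_int k = lam ^ nat k" using lam by (simp add: powr_realpow[symmetric])
  then have "nat k \<le> opt_index \<epsilon> \<delta> lam" using assms by (simp add: le_power_div_iff le_opt_index_iff)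
  then show ?thesis by linarith
qed simp

end

section \<open>The classical optimisation problem\<close>

text \<open>If exactly \<open>j\<close> of the \<open>M = N + 1\<close> factors of a permutation-invariant state are orthogonal
  to \<open>\<Psi>\<close> with probability \<open>c j\<close>, then \<open>M \<lambda> p\<^sub>\<rho> = \<Sum>\<^sub>j c j * pass_weight \<lambda> M j\<close> and
  \<open>M \<lambda> f\<^sub>\<rho> = \<Sum>\<^sub>j c j * fid_weight \<lambda> M j\<close>.\<close>
definition pass_weight :: "real \<Rightarrow> nat \<Rightarrow> nat \<Rightarrow> real" where
  "pass_weight lam M j = lam ^ j * (real M * lam + real j * (1 - lam))"

definition fid_weight :: "real \<Rightarrow> nat \<Rightarrow> nat \<Rightarrow> real" where
  "fid_weight lam M j = lam ^ Suc j * (real M - real j)"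

definition margin_weight :: "real \<Rightarrow> real \<Rightarrow> nat \<Rightarrow> nat \<Rightarrow> real" where
  "margin_weight \<epsilon> lam M j = fid_weight lam M j - (1 - \<epsilon>) * pass_weight lam M j"

text \<open>\<open>chord_value \<epsilon> lam M X k\<close> is \<open>pass_weight k - pass_weight (k + 1)\<close> times the value at \<open>X\<close> of
  the line through the points \<open>k\<close> and \<open>k + 1\<close> of the chain \<open>j \<mapsto> (pass_weight j, margin_weight j)\<close>.\<close>
definition chord_value :: "real \<Rightarrow> real \<Rightarrow> nat \<Rightarrow> real \<Rightarrow> nat \<Rightarrow> real" where
  "chord_value \<epsilon> lam M X k =
     (pass_weight lam M k - pass_weight lam M (Suc k)) * margin_weight \<epsilon> lam M k
     + (margin_weight \<epsilon> lam M k - margin_weight \<epsilon> lam M (Suc k)) * (X - pass_weight lam M k)"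

definition prob_vector :: "nat \<Rightarrow> (nat \<Rightarrow> real) \<Rightarrow> bool" where
  "prob_vector M c \<longleftrightarrow> (\<forall>j\<le>M. 0 \<le> c j) \<and> (\<Sum>j\<le>M. c j) = 1"

lemma pass_weight_Suc_less:
  assumes "0 < lam" "lam < 1" "2 \<le> M"
  shows "pass_weight lam M (Suc j) < pass_weight lam M j"
proof -
  have "pass_weight lam M j - pass_weight lam M (Suc j)
      = lam ^ j * (1 - lam) * (lam * (real M - 1) + real j * (1 - lam))"
    unfolding pass_weight_def by (simp add: algebra_simps)
  moreover have "0 < lam * (real M - 1) + real j * (1 - lam)"
    using assms by (intro add_pos_nonneg) auto
  ultimately have "0 < pass_weight lam M j - pass_weight lam M (Suc j)" using assms by simp
  then show ?thesis by simp
qed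

lemma pass_weight_antimono:
  assumes "0 < lam" "lam < 1" "2 \<le> M" "j \<le> k"
  shows "pass_weight lam M k \<le> pass_weight lam M j"
  using lift_Suc_antimono_le[where f = "pass_weight lam M",
      OF less_imp_le[OF pass_weight_Suc_less[OF assms(1-3)]] assms(4)] .

lemma pass_weight_segment:
  assumes "0 < lam" "lam < 1" "0 < X" "X \<le> real M * lam"
  obtains m where "pass_weight lam M (Suc m) < X" "X \<le> pass_weight lam M m"
proof -
  have "(\<lambda>j. real M * lam * lam ^ j + (1 - lam) * (real j * lam ^ j)) \<longlonglongrightarrow> real M * lam * 0 + (1 - lam) * 0"
    using assms by (intro tendsto_intros LIMSEQ_power_zero powser_times_n_limit_0) auto
  then have "pass_weight lam M \<longlonglongrightarrow> 0"
    unfolding pass_weight_def by (simp add: algebra_simps)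
  then have "eventually (\<lambda>j. pass_weight lam M j < X) sequentially"
    using \<open>0 < X\<close> by (rule order_tendstoD)
  then obtain n where "pass_weight lam M n < X" by (auto simp: eventually_sequentially)
  moreover have "\<not> pass_weight lam M 0 < X" using assms by (simp add: pass_weight_def)
  ultimately obtain m where "\<forall>i\<le>m. \<not> pass_weight lam M i < X" "pass_weight lam M (Suc m) < X"
    using ex_least_nat_less[of "\<lambda>j. pass_weight lam M j < X"] by blast
  then show ?thesis using that by (meson order.refl not_less)
qed

lemma margin_weight_eq:
  "margin_weight \<epsilon> lam M j = lam ^ j * (\<epsilon> * real M * lam - real j * (1 - \<epsilon> * (1 - lam)))"
  unfolding margin_weight_def fid_weight_def pass_weight_def by (simp add: algebra_simps)

lemma margin_weight_Suc:
  "margin_weight \<epsilon> lam M (Suc j) = lam * (margin_weight \<epsilon> lam M j - lam ^ j * (1 - \<epsilon> * (1 - lam)))"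
  unfolding margin_weight_eq by (simp add: algebra_simps)

lemma margin_weight_decrement_pos:
  fixes \<epsilon> lam :: real
  assumes "0 < \<epsilon>" "\<epsilon> < 1" "0 < lam" "lam < 1"
  shows "0 < lam ^ j * (1 - \<epsilon> * (1 - lam))"
proof -
  have "\<epsilon> * (1 - lam) \<le> \<epsilon>" using assms by (simp add: mult_left_le)
  then have "0 < 1 - \<epsilon> * (1 - lam)" using assms by linarith
  then show ?thesis using assms by simp
qed

lemma margin_weight_Suc_neg:
  assumes "0 < \<epsilon>" "\<epsilon> < 1" "0 < lam" "lam < 1" "margin_weight \<epsilon> lam M j < 0"
  shows "margin_weight \<epsilon> lam M (Suc j) < 0"
  unfolding margin_weight_Suc using margin_weight_decrement_pos[OF assms(1-4), of j] assms
  by (intro mult_pos_neg) auto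

lemma margin_weight_Suc_le:
  assumes "0 < \<epsilon>" "\<epsilon> < 1" "0 < lam" "lam < 1" "0 \<le> margin_weight \<epsilon> lam M j"
  shows "margin_weight \<epsilon> lam M (Suc j) \<le> margin_weight \<epsilon> lam M j"
proof -
  have "margin_weight \<epsilon> lam M (Suc j) \<le> lam * margin_weight \<epsilon> lam M j"
    unfolding margin_weight_Suc using margin_weight_decrement_pos[OF assms(1-4), of j] assms(3)
    by (intro mult_left_mono) auto
  also have "\<dots> \<le> margin_weight \<epsilon> lam M j" using assms by (intro mult_left_le_one_le) auto
  finally show ?thesis .
qed

text \<open>Convexity: every point of the chain lies above the line through the points \<open>k\<close> and \<open>k + 1\<close>.\<close>
lemma margin_weight_above_chord:
  assumes "0 < lam" "lam < 1"
  shows "(pass_weight lam M k - pass_weight lam M (Suc k)) * margin_weight \<epsilon> lam M k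
       + (margin_weight \<epsilon> lam M k - margin_weight \<epsilon> lam M (Suc k)) * (pass_weight lam M j - pass_weight lam M k)
     \<le> (pass_weight lam M k - pass_weight lam M (Suc k)) * margin_weight \<epsilon> lam M j"
proof -
  define E where "E i = (pass_weight lam M k - pass_weight lam M (Suc k)) * (margin_weight \<epsilon> lam M i - margin_weight \<epsilon> lam M k)
      - (margin_weight \<epsilon> lam M k - margin_weight \<epsilon> lam M (Suc k)) * (pass_weight lam M i - pass_weight lam M k)" for i
  have step: "E (Suc i) - E i = lam ^ i * lam ^ k * lam * (1 - lam)\<^sup>2 * real M * (real i - real k)" for i
    unfolding E_def margin_weight_def fid_weight_def pass_weight_def
    by (simp add: algebra_simps power2_eq_square)
  have "E k \<le> E j"
  proof (rule min_at_sign_change_nat)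
    fix i
    have "0 \<le> lam ^ i * lam ^ k * lam * (1 - lam)\<^sup>2 * real M" using assms by simp
    then show "i < k \<Longrightarrow> E (Suc i) \<le> E i" "k \<le> i \<Longrightarrow> E i \<le> E (Suc i)"
      using step[of i] mult_nonneg_nonpos mult_nonneg_nonneg by (smt (verit) of_nat_less_iff of_nat_le_iff)+
  qed
  then show ?thesis unfolding E_def by (simp add: algebra_simps)
qed

lemma chord_value_two_point:
  "chord_value \<epsilon> lam M X m = (X - pass_weight lam M (Suc m)) * margin_weight \<epsilon> lam M m
     + (pass_weight lam M m - X) * margin_weight \<epsilon> lam M (Suc m)"
  unfolding chord_value_def by (simp add: algebra_simps)

lemma chord_value_le_segment:
  assumes "0 < lam" "lam < 1" "pass_weight lam M (Suc m) \<le> X" "X \<le> pass_weight lam M m"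
  shows "(pass_weight lam M m - pass_weight lam M (Suc m)) * chord_value \<epsilon> lam M X k
     \<le> (pass_weight lam M k - pass_weight lam M (Suc k)) * chord_value \<epsilon> lam M X m"
proof -
  let ?p = "pass_weight lam M" and ?h = "margin_weight \<epsilon> lam M"
  let ?line = "\<lambda>j. (?p k - ?p (Suc k)) * ?h k + (?h k - ?h (Suc k)) * (?p j - ?p k)"
  have "(?p m - ?p (Suc m)) * chord_value \<epsilon> lam M X k
      = (X - ?p (Suc m)) * ?line m + (?p m - X) * ?line (Suc m)"
    unfolding chord_value_def by (simp add: algebra_simps)
  also have "\<dots> \<le> (X - ?p (Suc m)) * ((?p k - ?p (Suc k)) * ?h m) + (?p m - X) * ((?p k - ?p (Suc k)) * ?h (Suc m))"
    using assms margin_weight_above_chord[OF assms(1,2)] by (intro add_mono mult_left_mono) auto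
  also have "\<dots> = (?p k - ?p (Suc k)) * chord_value \<epsilon> lam M X m"
    unfolding chord_value_two_point by (simp add: algebra_simps)
  finally show ?thesis .
qed

lemma sum_margin_weight_above_chord:
  assumes "0 < lam" "lam < 1" "prob_vector M c"
  shows "(pass_weight lam M k - pass_weight lam M (Suc k)) * margin_weight \<epsilon> lam M k
       + (margin_weight \<epsilon> lam M k - margin_weight \<epsilon> lam M (Suc k))
         * ((\<Sum>j\<le>M. c j * pass_weight lam M j) - pass_weight lam M k)
     \<le> (pass_weight lam M k - pass_weight lam M (Suc k)) * (\<Sum>j\<le>M. c j * margin_weight \<epsilon> lam M j)"
proof -
  let ?p = "pass_weight lam M" and ?h = "margin_weight \<epsilon> lam M"
  let ?D = "?p k - ?p (Suc k)" and ?g = "?h k - ?h (Suc k)"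
  have "?D * ?h k + ?g * ((\<Sum>j\<le>M. c j * ?p j) - ?p k)
      = (?D * ?h k - ?g * ?p k) * (\<Sum>j\<le>M. c j) + ?g * (\<Sum>j\<le>M. c j * ?p j)"
    using assms(3) unfolding prob_vector_def by (simp add: algebra_simps)
  also have "\<dots> = (\<Sum>j\<le>M. (?D * ?h k - ?g * ?p k) * c j + ?g * (c j * ?p j))"
    by (simp add: sum.distrib sum_distrib_left)
  also have "\<dots> = (\<Sum>j\<le>M. c j * (?D * ?h k + ?g * (?p j - ?p k)))"
    by (intro sum.cong) (auto simp: algebra_simps)
  also have "\<dots> \<le> (\<Sum>j\<le>M. c j * (?D * ?h j))"
    using assms margin_weight_above_chord[OF assms(1,2)]
    by (intro sum_mono mult_left_mono) (auto simp: prob_vector_def)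
  also have "\<dots> = ?D * (\<Sum>j\<le>M. c j * ?h j)"
    by (simp add: sum_distrib_left algebra_simps)
  finally show ?thesis .
qed

lemma margin_nonneg_of_chord:
  assumes "0 < \<epsilon>" "\<epsilon> < 1" "0 < lam" "lam < 1" "2 \<le> M" "0 < X" "X \<le> real M * lam"
    and k: "0 \<le> chord_value \<epsilon> lam M X k"
    and c: "prob_vector M c" "X \<le> (\<Sum>j\<le>M. c j * pass_weight lam M j)"
  shows "0 \<le> (\<Sum>j\<le>M. c j * margin_weight \<epsilon> lam M j)"
proof -
  let ?p = "pass_weight lam M" and ?h = "margin_weight \<epsilon> lam M"
  obtain m where m: "?p (Suc m) < X" "X \<le> ?p m" using pass_weight_segment assms(3,4,6,7) by blast
  have D: "0 < ?p i - ?p (Suc i)" for i using pass_weight_Suc_less assms(3-5) by simp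
  have "0 \<le> (?p m - ?p (Suc m)) * chord_value \<epsilon> lam M X k"
    using D[of m] k by (intro mult_nonneg_nonneg) auto
  also have "\<dots> \<le> (?p k - ?p (Suc k)) * chord_value \<epsilon> lam M X m"
    using m by (intro chord_value_le_segment) (use assms in auto)
  finally have chord_m: "0 \<le> chord_value \<epsilon> lam M X m" using D[of k] by (auto simp: zero_le_mult_iff)
  have "0 \<le> ?h m"
  proof (rule ccontr)
    assume "\<not> 0 \<le> ?h m"
    then have "?h m < 0" "?h (Suc m) < 0" using margin_weight_Suc_neg assms(1-4) by auto
    then have "(X - ?p (Suc m)) * ?h m + (?p m - X) * ?h (Suc m) < 0"
      using m by (intro add_neg_nonpos mult_pos_neg mult_nonneg_nonpos) auto
    then show False using chord_m by (simp add: chord_value_two_point)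
  qed
  then have slope: "0 \<le> ?h m - ?h (Suc m)" using margin_weight_Suc_le assms(1-4) by simp
  have "chord_value \<epsilon> lam M X m
      \<le> (?p m - ?p (Suc m)) * ?h m + (?h m - ?h (Suc m)) * ((\<Sum>j\<le>M. c j * ?p j) - ?p m)"
    unfolding chord_value_def using slope c(2) by (intro add_left_mono mult_left_mono) auto
  also have "\<dots> \<le> (?p m - ?p (Suc m)) * (\<Sum>j\<le>M. c j * ?h j)"
    using sum_margin_weight_above_chord assms(3,4) c(1) by blast
  finally have "0 \<le> (?p m - ?p (Suc m)) * (\<Sum>j\<le>M. c j * ?h j)" using chord_m by linarith
  then show ?thesis using D[of m] by (auto simp: zero_le_mult_iff)
qed

lemma sum_two_point:
  fixes f :: "nat \<Rightarrow> real"
  assumes "Suc m \<le> M"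
  shows "(\<Sum>j\<le>M. (if j = m then u else if j = Suc m then v else 0) * f j) = u * f m + v * f (Suc m)"
proof -
  have "(\<Sum>j\<le>M. (if j = m then u else if j = Suc m then v else 0) * f j)
      = (\<Sum>j\<le>M. (if j = m then u * f m else 0) + (if j = Suc m then v * f (Suc m) else 0))"
    by (intro sum.cong) auto
  also have "\<dots> = u * f m + v * f (Suc m)" using assms by (simp add: sum.distrib)
  finally show ?thesis .
qed

lemma margin_neg_witness:
  assumes "0 < \<epsilon>" "\<epsilon> < 1" "0 < lam" "lam < 1" "2 \<le> M"
    and m: "pass_weight lam M (Suc m) < X" "X \<le> pass_weight lam M m"
    and neg: "chord_value \<epsilon> lam M X m < 0"
  shows "\<exists>c. prob_vector M c \<and> X \<le> (\<Sum>j\<le>M. c j * pass_weight lam M j)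
           \<and> (\<Sum>j\<le>M. c j * margin_weight \<epsilon> lam M j) < 0"
proof (cases "Suc m \<le> M")
  case True
  let ?p = "pass_weight lam M"
  define D where "D = ?p m - ?p (Suc m)"
  have "0 < D" unfolding D_def using pass_weight_Suc_less assms(3-5) by simp
  define c where "c j = (if j = m then (X - ?p (Suc m)) / D else if j = Suc m then (?p m - X) / D else 0)" for j
  have sum_c: "(\<Sum>j\<le>M. c j * f j) = ((X - ?p (Suc m)) * f m + (?p m - X) * f (Suc m)) / D" for f
    unfolding c_def sum_two_point[OF True] by (simp add: add_divide_distrib)
  have "prob_vector M c"
    unfolding prob_vector_def using sum_c[of "\<lambda>_. 1"] m \<open>0 < D\<close> by (auto simp: c_def D_def)
  moreover have "(\<Sum>j\<le>M. c j * ?p j) = X"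
    unfolding sum_c using \<open>0 < D\<close> by (simp add: D_def field_simps)
  moreover have "(\<Sum>j\<le>M. c j * margin_weight \<epsilon> lam M j) < 0"
    unfolding sum_c chord_value_two_point[symmetric] using neg \<open>0 < D\<close> by (simp add: divide_neg_pos)
  ultimately show ?thesis by auto
next
  case False
  define c where "c j = (of_bool (j = M) :: real)" for j :: nat
  have sum_c: "(\<Sum>j\<le>M. c j * f j) = f M" for f
    unfolding c_def by (simp add: Int_absorb1)
  have "X \<le> pass_weight lam M M" using m pass_weight_antimono[of lam M M m] False assms by simp
  moreover have "margin_weight \<epsilon> lam M M = - (1 - \<epsilon>) * real M * lam ^ M"
    unfolding margin_weight_eq by (simp add: algebra_simps)
  then have "margin_weight \<epsilon> lam M M < 0" using assms by (simp add: mult_neg_pos)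
  moreover have "prob_vector M c" unfolding prob_vector_def c_def by simp
  ultimately show ?thesis using sum_c by auto
qed

lemma margin_nonneg_iff_chord:
  assumes "0 < \<epsilon>" "\<epsilon> < 1" "0 < lam" "lam < 1" "2 \<le> M" "0 < X" "X \<le> real M * lam"
  shows "(\<forall>c. prob_vector M c \<and> X \<le> (\<Sum>j\<le>M. c j * pass_weight lam M j)
            \<longrightarrow> 0 \<le> (\<Sum>j\<le>M. c j * margin_weight \<epsilon> lam M j))
     \<longleftrightarrow> (\<exists>k. 0 \<le> chord_value \<epsilon> lam M X k)"
proof
  assume all: "\<forall>c. prob_vector M c \<and> X \<le> (\<Sum>j\<le>M. c j * pass_weight lam M j)
            \<longrightarrow> 0 \<le> (\<Sum>j\<le>M. c j * margin_weight \<epsilon> lam M j)"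
  obtain m where m: "pass_weight lam M (Suc m) < X" "X \<le> pass_weight lam M m"
    using pass_weight_segment assms(3,4,6,7) by blast
  show "\<exists>k. 0 \<le> chord_value \<epsilon> lam M X k"
    using margin_neg_witness[OF assms(1-5) m] all by (meson not_le)
qed (use margin_nonneg_of_chord assms in blast)

lemma chord_value_eq_Ntil:
  assumes "0 < \<epsilon>" "0 < \<delta>" "0 < lam" "lam < 1"
  shows "chord_value \<epsilon> lam (Suc N) (real (Suc N) * lam * \<delta>) k
     = real (Suc N) * lam ^ Suc k * (lam * (1 - lam) * \<delta> * \<epsilon>) * (real N - Ntil \<epsilon> \<delta> lam k)"
proof -
  have Ntil: "(lam * (1 - lam) * \<delta> * \<epsilon>) * Ntil \<epsilon> \<delta> lam k =
     real k * (1 - lam)\<^sup>2 * \<delta> * (1 - \<epsilon>) + lam ^ Suc k + lam * \<delta> * (real k * (1 - lam) - 1)"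
    unfolding Ntil_def using assms by simp
  have "real (Suc N) * lam ^ Suc k * (lam * (1 - lam) * \<delta> * \<epsilon>) * (real N - Ntil \<epsilon> \<delta> lam k)
     = real (Suc N) * lam ^ Suc k * ((lam * (1 - lam) * \<delta> * \<epsilon>) * real N
        - (real k * (1 - lam)\<^sup>2 * \<delta> * (1 - \<epsilon>) + lam ^ Suc k + lam * \<delta> * (real k * (1 - lam) - 1)))"
    unfolding Ntil[symmetric] by (simp add: algebra_simps)
  also have "\<dots> = chord_value \<epsilon> lam (Suc N) (real (Suc N) * lam * \<delta>) k"
    unfolding chord_value_def margin_weight_def fid_weight_def pass_weight_def
    by (simp add: algebra_simps power2_eq_square)
  finally show ?thesis by simp
qed

lemma chord_value_nonneg_iff:
  assumes "0 < \<epsilon>" "0 < \<delta>" "0 < lam" "lam < 1"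
  shows "0 \<le> chord_value \<epsilon> lam (Suc N) (real (Suc N) * lam * \<delta>) k \<longleftrightarrow> Ntil \<epsilon> \<delta> lam k \<le> real N"
proof -
  define A where "A = real (Suc N) * lam ^ Suc k * (lam * (1 - lam) * \<delta> * \<epsilon>)"
  have "0 < A" unfolding A_def using assms by simp
  then show ?thesis unfolding chord_value_eq_Ntil[OF assms] A_def[symmetric] by (simp add: zero_le_mult_iff)
qed

section \<open>Tensor indices and traces\<close>

lemma finite_idx: "finite (idx D n)"
  unfolding idx_def using finite_lists_length_eq[of "{..<D}" n] by (simp add: conj_commute)

lemma idx_Suc: "idx D (Suc n) = (\<lambda>(xs, a). xs @ [a]) ` (idx D n \<times> {..<D})"
proof (intro set_eqI iffI)
  fix ys assume "ys \<in> idx D (Suc n)"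
  then have "length ys = Suc n" "set ys \<subseteq> {..<D}" unfolding idx_def by auto
  moreover obtain xs a where "ys = xs @ [a]"
    using \<open>length ys = Suc n\<close> by (metis append_butlast_last_id length_0_conv nat.distinct(1))
  ultimately show "ys \<in> (\<lambda>(xs, a). xs @ [a]) ` (idx D n \<times> {..<D})"
    unfolding idx_def by (auto intro!: image_eqI[of _ _ "(xs, a)"])
qed (auto simp: idx_def)

lemma sum_idx_prod:
  fixes F :: "nat \<Rightarrow> nat \<Rightarrow> 'b::comm_semiring_1"
  shows "(\<Sum>xs\<in>idx D n. \<Prod>i<n. F i (xs ! i)) = (\<Prod>i<n. \<Sum>a<D. F i a)"
proof (induction n)
  case 0
  have "idx D 0 = {[]}" unfolding idx_def by auto
  then show ?case by simp
next
  case (Suc n)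
  have "(\<Sum>xs\<in>idx D (Suc n). \<Prod>i<Suc n. F i (xs ! i))
      = (\<Sum>(xs, a)\<in>idx D n \<times> {..<D}. \<Prod>i<Suc n. F i ((xs @ [a]) ! i))"
    unfolding idx_Suc by (subst sum.reindex) (auto intro!: inj_onI simp: case_prod_beta)
  also have "\<dots> = (\<Sum>(xs, a)\<in>idx D n \<times> {..<D}. (\<Prod>i<n. F i (xs ! i)) * F n a)"
    by (intro sum.cong refl) (auto simp: idx_def nth_append intro!: prod.cong)
  also have "\<dots> = (\<Prod>i<Suc n. \<Sum>a<D. F i a)"
    by (simp add: sum.cartesian_product[symmetric] sum_product[symmetric] Suc.IH)
  finally show ?case .
qed

lemma sum_idx_idx_prod:
  fixes G :: "nat \<Rightarrow> nat \<Rightarrow> nat \<Rightarrow> 'b::comm_semiring_1"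
  shows "(\<Sum>xs\<in>idx D n. \<Sum>ys\<in>idx D n. \<Prod>i<n. G i (xs ! i) (ys ! i)) = (\<Prod>i<n. \<Sum>a<D. \<Sum>b<D. G i a b)"
proof -
  have "(\<Sum>xs\<in>idx D n. \<Sum>ys\<in>idx D n. \<Prod>i<n. G i (xs ! i) (ys ! i))
      = (\<Sum>xs\<in>idx D n. \<Prod>i<n. \<Sum>b<D. G i (xs ! i) b)"
    by (intro sum.cong refl) (rule sum_idx_prod)
  also have "\<dots> = (\<Prod>i<n. \<Sum>a<D. \<Sum>b<D. G i a b)"
    by (rule sum_idx_prod)
  finally show ?thesis .
qed

lemma perm_idx_nth: "k < n \<Longrightarrow> perm_idx n \<sigma> x ! k = x ! \<sigma> k"
  unfolding perm_idx_def by simp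

lemma bij_betw_perm_idx:
  assumes "\<sigma> permutes {..<n}"
  shows "bij_betw (perm_idx n \<sigma>) (idx D n) (idx D n)"
proof -
  have maps: "perm_idx n \<sigma> x \<in> idx D n" if "x \<in> idx D n" for x
  proof -
    have "x ! \<sigma> k < D" if "k < n" for k
    proof -
      have "x ! \<sigma> k \<in> set x"
        using \<open>x \<in> idx D n\<close> permutes_in_image[OF assms, of k] that unfolding idx_def by simp
      then show ?thesis using \<open>x \<in> idx D n\<close> unfolding idx_def by auto
    qed
    then show ?thesis unfolding idx_def perm_idx_def by (auto simp: in_set_conv_nth)
  qed
  have inj: "inj_on (perm_idx n \<sigma>) (idx D n)"
  proof (rule inj_onI)
    fix x y assume "x \<in> idx D n" "y \<in> idx D n" and eq: "perm_idx n \<sigma> x = perm_idx n \<sigma> y"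
    have "x ! \<sigma> k = y ! \<sigma> k" if "k < n" for k
      using arg_cong[OF eq, of "\<lambda>xs. xs ! k"] that by (simp add: perm_idx_nth)
    then have "x ! j = y ! j" if "j < n" for j
      using that permutes_image[OF assms] by (metis imageE lessThan_iff)
    then show "x = y" using \<open>x \<in> idx D n\<close> \<open>y \<in> idx D n\<close> unfolding idx_def by (auto intro: nth_equalityI)
  qed
  then have "perm_idx n \<sigma> ` idx D n = idx D n"
    using maps by (intro endo_inj_surj finite_idx) auto
  then show ?thesis using inj unfolding bij_betw_def by simp
qed

lemma prod_permutes_reindex:
  assumes "\<sigma> permutes {..<M}"
  shows "(\<Prod>k<M. G (k \<in> S) (\<sigma> k)) = (\<Prod>j<M. G (j \<in> \<sigma> ` S) j)"
proof -
  have "(\<Prod>j<M. G (j \<in> \<sigma> ` S) j) = (\<Prod>k<M. G (\<sigma> k \<in> \<sigma> ` S) (\<sigma> k))"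
    using prod.reindex_bij_betw[OF permutes_imp_bij[OF assms], of "\<lambda>j. G (j \<in> \<sigma> ` S) j"] by simp
  then show ?thesis using permutes_inj[OF assms] by (simp add: inj_image_mem_iff)
qed

lemma trAB_sum: "trAB D M (\<lambda>x y. \<Sum>S\<in>A. f S x y) \<rho> = (\<Sum>S\<in>A. trAB D M (f S) \<rho>)"
  unfolding trAB_def by (simp add: sum_distrib_right sum.swap[of _ A])

lemma trAB_cmult: "trAB D M (\<lambda>x y. c * f x y) \<rho> = c * trAB D M f \<rho>"
  unfolding trAB_def by (simp add: sum_distrib_left mult.assoc)

lemma trAB_cong:
  "(\<And>x y. x \<in> idx D M \<Longrightarrow> y \<in> idx D M \<Longrightarrow> f x y = g x y) \<Longrightarrow> trAB D M f \<rho> = trAB D M g \<rho>"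
  unfolding trAB_def by (intro sum.cong refl) auto

lemma trAB_permute:
  assumes "\<sigma> permutes {..<M}" "perm_inv D M \<rho>"
  shows "trAB D M (\<lambda>x y. A (perm_idx M \<sigma> x) (perm_idx M \<sigma> y)) \<rho> = trAB D M A \<rho>"
proof -
  have b: "bij_betw (perm_idx M \<sigma>) (idx D M) (idx D M)" by (rule bij_betw_perm_idx[OF assms(1)])
  have "trAB D M (\<lambda>x y. A (perm_idx M \<sigma> x) (perm_idx M \<sigma> y)) \<rho>
      = (\<Sum>x\<in>idx D M. \<Sum>y\<in>idx D M. A (perm_idx M \<sigma> x) (perm_idx M \<sigma> y) * \<rho> (perm_idx M \<sigma> y) (perm_idx M \<sigma> x))"
    using assms(2) unfolding trAB_def perm_inv_def by (intro sum.cong refl) (simp add: assms(1))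
  also have "\<dots> = (\<Sum>x\<in>idx D M. \<Sum>y\<in>idx D M. A (perm_idx M \<sigma> x) y * \<rho> y (perm_idx M \<sigma> x))"
    by (intro sum.cong refl sum.reindex_bij_betw[OF b])
  also have "\<dots> = trAB D M A \<rho>"
    unfolding trAB_def by (rule sum.reindex_bij_betw[OF b])
  finally show ?thesis .
qed

lemma trAB_rank_one:
  "trAB D M (\<lambda>x y. v x * cnj (v y)) \<rho> = (\<Sum>y\<in>idx D M. \<Sum>x\<in>idx D M. cnj (v y) * \<rho> y x * v x)"
proof -
  have "trAB D M (\<lambda>x y. v x * cnj (v y)) \<rho> = (\<Sum>x\<in>idx D M. \<Sum>y\<in>idx D M. cnj (v y) * \<rho> y x * v x)"
    unfolding trAB_def by (simp add: algebra_simps)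
  also have "\<dots> = (\<Sum>y\<in>idx D M. \<Sum>x\<in>idx D M. cnj (v y) * \<rho> y x * v x)"
    by (rule sum.swap)
  finally show ?thesis .
qed

lemma trAB_gram_nonneg:
  assumes "density_op D M \<rho>"
    and "\<And>x y. x \<in> idx D M \<Longrightarrow> y \<in> idx D M \<Longrightarrow> A x y = (\<Sum>r\<in>R. v r x * cnj (v r y))"
  shows "0 \<le> Re (trAB D M A \<rho>)"
proof -
  have "trAB D M A \<rho> = trAB D M (\<lambda>x y. \<Sum>r\<in>R. v r x * cnj (v r y)) \<rho>"
    using assms(2) by (rule trAB_cong)
  also have "\<dots> = (\<Sum>r\<in>R. trAB D M (\<lambda>x y. v r x * cnj (v r y)) \<rho>)"
    by (rule trAB_sum)
  finally show ?thesis
    using assms(1) unfolding density_op_def trAB_rank_one by (simp add: Re_sum sum_nonneg)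
qed

section \<open>Weights of patterns of orthogonal factors\<close>

definition proj_perp :: "(nat \<Rightarrow> complex) \<Rightarrow> nat \<Rightarrow> nat \<Rightarrow> complex" where
  "proj_perp \<Psi> i j = (if i = j then 1 else 0) - proj \<Psi> i j"

definition pattern_proj :: "(nat \<Rightarrow> complex) \<Rightarrow> nat \<Rightarrow> nat set \<Rightarrow> nat list \<Rightarrow> nat list \<Rightarrow> complex" where
  "pattern_proj \<Psi> M S x y = (\<Prod>i<M. (if i \<in> S then proj_perp \<Psi> else proj \<Psi>) (x ! i) (y ! i))"

definition pattern_weight :: "nat \<Rightarrow> (nat \<Rightarrow> complex) \<Rightarrow> nat \<Rightarrow> (nat list \<Rightarrow> nat list \<Rightarrow> complex) \<Rightarrow> nat set \<Rightarrow> real" where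
  "pattern_weight D \<Psi> M \<rho> S = Re (trAB D M (pattern_proj \<Psi> M S) \<rho>)"

lemma pattern_weight_image:
  assumes "\<sigma> permutes {..<M}" "perm_inv D M \<rho>"
  shows "pattern_weight D \<Psi> M \<rho> (\<sigma> ` S) = pattern_weight D \<Psi> M \<rho> S"
proof -
  have "pattern_proj \<Psi> M S (perm_idx M \<sigma> x) (perm_idx M \<sigma> y) = pattern_proj \<Psi> M (\<sigma> ` S) x y" for x y
  proof -
    have "pattern_proj \<Psi> M S (perm_idx M \<sigma> x) (perm_idx M \<sigma> y)
        = (\<Prod>k<M. (if k \<in> S then proj_perp \<Psi> else proj \<Psi>) (x ! \<sigma> k) (y ! \<sigma> k))"
      unfolding pattern_proj_def by (intro prod.cong) (auto simp: perm_idx_nth)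
    then show ?thesis unfolding pattern_proj_def
      using prod_permutes_reindex[OF assms(1), of "\<lambda>b j. (if b then proj_perp \<Psi> else proj \<Psi>) (x ! j) (y ! j)"]
      by simp
  qed
  then show ?thesis
    unfolding pattern_weight_def using trAB_permute[OF assms, of "pattern_proj \<Psi> M S"] by simp
qed

lemma prod_proj_add_perp:
  fixes \<alpha> :: "nat \<Rightarrow> complex"
  shows "(\<Prod>i<M. proj \<Psi> (x ! i) (y ! i) + \<alpha> i * proj_perp \<Psi> (x ! i) (y ! i))
       = (\<Sum>S\<in>Pow {..<M}. (\<Prod>i\<in>S. \<alpha> i) * pattern_proj \<Psi> M S x y)"
proof -
  have split: "pattern_proj \<Psi> M S x y
      = (\<Prod>i\<in>S. proj_perp \<Psi> (x ! i) (y ! i)) * (\<Prod>i\<in>{..<M} - S. proj \<Psi> (x ! i) (y ! i))"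
    if "S \<subseteq> {..<M}" for S
  proof -
    have "pattern_proj \<Psi> M S x y = (\<Prod>i<M. if i \<in> S then proj_perp \<Psi> (x ! i) (y ! i) else proj \<Psi> (x ! i) (y ! i))"
      unfolding pattern_proj_def by (intro prod.cong) auto
    also have "\<dots> = (\<Prod>i\<in>{..<M} \<inter> {i. i \<in> S}. proj_perp \<Psi> (x ! i) (y ! i))
        * (\<Prod>i\<in>{..<M} \<inter> - {i. i \<in> S}. proj \<Psi> (x ! i) (y ! i))"
      by (rule prod.If_cases) simp
    also have "{..<M} \<inter> {i. i \<in> S} = S" using that by auto
    also have "{..<M} \<inter> - {i. i \<in> S} = {..<M} - S" by auto
    finally show ?thesis .
  qed
  have "(\<Prod>i<M. proj \<Psi> (x ! i) (y ! i) + \<alpha> i * proj_perp \<Psi> (x ! i) (y ! i))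
      = (\<Sum>S\<in>Pow {..<M}. (\<Prod>i\<in>S. \<alpha> i * proj_perp \<Psi> (x ! i) (y ! i)) * (\<Prod>i\<in>{..<M} - S. proj \<Psi> (x ! i) (y ! i)))"
    by (subst add.commute) (rule prod_add, simp)
  also have "\<dots> = (\<Sum>S\<in>Pow {..<M}. (\<Prod>i\<in>S. \<alpha> i) * pattern_proj \<Psi> M S x y)"
    by (intro sum.cong refl) (simp add: split prod.distrib mult.assoc)
  finally show ?thesis .
qed

lemma sum_pattern_proj:
  assumes "x \<in> idx D M" "y \<in> idx D M"
  shows "(\<Sum>S\<in>Pow {..<M}. pattern_proj \<Psi> M S x y) = (if x = y then 1 else 0)"
proof -
  have "(\<Sum>S\<in>Pow {..<M}. pattern_proj \<Psi> M S x y) = (\<Prod>i<M. proj \<Psi> (x ! i) (y ! i) + 1 * proj_perp \<Psi> (x ! i) (y ! i))"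
    using prod_proj_add_perp[where \<alpha> = "\<lambda>_. 1" and \<Psi> = \<Psi> and x = x and y = y and M = M] by simp
  also have "\<dots> = (\<Prod>i<M. if x ! i = y ! i then 1 else 0)"
    unfolding proj_perp_def by simp
  also have "\<dots> = (if x = y then 1 else 0)"
    using assms unfolding idx_def by (auto intro: nth_equalityI)
  finally show ?thesis .
qed

lemma sum_pattern_weight:
  assumes "density_op D M \<rho>"
  shows "(\<Sum>S\<in>Pow {..<M}. pattern_weight D \<Psi> M \<rho> S) = 1"
proof -
  have "(\<Sum>S\<in>Pow {..<M}. trAB D M (pattern_proj \<Psi> M S) \<rho>)
      = trAB D M (\<lambda>x y. \<Sum>S\<in>Pow {..<M}. pattern_proj \<Psi> M S x y) \<rho>"
    by (rule trAB_sum[symmetric])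
  also have "\<dots> = trAB D M (\<lambda>x y. if x = y then 1 else 0) \<rho>"
    by (rule trAB_cong) (rule sum_pattern_proj)
  also have "\<dots> = (\<Sum>x\<in>idx D M. \<Sum>y\<in>idx D M. if y = x then \<rho> x x else 0)"
    unfolding trAB_def by (intro sum.cong refl) auto
  also have "\<dots> = (\<Sum>x\<in>idx D M. \<rho> x x)"
    by (simp add: finite_idx)
  also have "\<dots> = 1" using assms unfolding density_op_def by simp
  finally show ?thesis unfolding pattern_weight_def by (metis Re_sum one_complex.simps(1))
qed

lemma sum_cnj_mult_self: "(\<Sum>i\<in>A. cnj (\<Psi> i) * \<Psi> i) = complex_of_real (\<Sum>i\<in>A. (cmod (\<Psi> i))\<^sup>2)"
  unfolding of_real_sum by (intro sum.cong refl) (metis complex_norm_square mult.commute of_real_power)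

text \<open>For \<open>b\<close> the vectors \<open>gram_vec \<Psi> b r\<close>, \<open>r < D\<close>, are the columns of \<open>1 - |\<Psi>\<rangle>\<langle>\<Psi>|\<close>;
  otherwise they are \<open>\<Psi>\<close> padded with zero vectors, so that both kinds of factor are indexed
  by the same \<open>r < D\<close>.\<close>
definition gram_vec :: "(nat \<Rightarrow> complex) \<Rightarrow> bool \<Rightarrow> nat \<Rightarrow> nat \<Rightarrow> complex" where
  "gram_vec \<Psi> b r a = (if b then (if a = r then 1 else 0) - \<Psi> a * cnj (\<Psi> r) else if r = 0 then \<Psi> a else 0)"

lemma proj_eq_gram:
  assumes "0 < D" "(\<Sum>i<D. cnj (\<Psi> i) * \<Psi> i) = 1" "a < D" "a' < D"
  shows "(if b then proj_perp \<Psi> else proj \<Psi>) a a' = (\<Sum>r<D. gram_vec \<Psi> b r a * cnj (gram_vec \<Psi> b r a'))"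
proof (cases b)
  case False
  have "(\<Sum>r<D. gram_vec \<Psi> b r a * cnj (gram_vec \<Psi> b r a')) = (\<Sum>r<D. if r = 0 then \<Psi> a * cnj (\<Psi> a') else 0)"
    unfolding gram_vec_def using False by (intro sum.cong) auto
  then show ?thesis using False assms(1) unfolding proj_def by simp
next
  case True
  have "(\<Sum>r<D. gram_vec \<Psi> b r a * cnj (gram_vec \<Psi> b r a'))
      = (\<Sum>r<D. (if r = a then (if a = a' then 1 else 0) else 0)
            - (if r = a then cnj (\<Psi> a') * \<Psi> a else 0)
            - (if r = a' then \<Psi> a * cnj (\<Psi> a') else 0)
            + \<Psi> a * cnj (\<Psi> a') * (cnj (\<Psi> r) * \<Psi> r))"
    unfolding gram_vec_def using True by (intro sum.cong) (auto simp: algebra_simps)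
  also have "\<dots> = (if a = a' then 1 else 0) - cnj (\<Psi> a') * \<Psi> a - \<Psi> a * cnj (\<Psi> a')
       + \<Psi> a * cnj (\<Psi> a') * (\<Sum>r<D. cnj (\<Psi> r) * \<Psi> r)"
    using assms(3,4) by (simp add: sum.distrib sum_subtractf sum_distrib_left)
  also have "\<dots> = proj_perp \<Psi> a a'" unfolding assms(2) proj_perp_def proj_def by simp
  finally show ?thesis using True by simp
qed

lemma pattern_weight_nonneg:
  assumes "0 < D" "(\<Sum>i<D. cnj (\<Psi> i) * \<Psi> i) = 1" "density_op D M \<rho>"
  shows "0 \<le> pattern_weight D \<Psi> M \<rho> S"
  unfolding pattern_weight_def
proof (rule trAB_gram_nonneg[OF assms(3)])
  fix x y assume "x \<in> idx D M" "y \<in> idx D M"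
  then have "x ! i < D" "y ! i < D" if "i < M" for i
    using that unfolding idx_def by (auto simp: subset_iff)
  then have "pattern_proj \<Psi> M S x y
      = (\<Prod>i<M. \<Sum>r<D. gram_vec \<Psi> (i \<in> S) r (x ! i) * cnj (gram_vec \<Psi> (i \<in> S) r (y ! i)))"
    unfolding pattern_proj_def using proj_eq_gram[OF assms(1,2)] by (intro prod.cong) auto
  also have "\<dots> = (\<Sum>rs\<in>idx D M. \<Prod>i<M. gram_vec \<Psi> (i \<in> S) (rs ! i) (x ! i) * cnj (gram_vec \<Psi> (i \<in> S) (rs ! i) (y ! i)))"
    by (rule sum_idx_prod[symmetric])
  finally show "pattern_proj \<Psi> M S x y = (\<Sum>rs\<in>idx D M. (\<Prod>i<M. gram_vec \<Psi> (i \<in> S) (rs ! i) (x ! i))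
      * cnj (\<Prod>i<M. gram_vec \<Psi> (i \<in> S) (rs ! i) (y ! i)))"
    by (simp add: prod.distrib)
qed

lemma Re_trAB_test_op:
  assumes "\<And>a b. B a b = proj \<Psi> a b + complex_of_real \<beta> * proj_perp \<Psi> a b"
  shows "Re (trAB D (Suc N) (test_op \<Psi> lam N B) \<rho>)
       = (\<Sum>S\<in>Pow {..<Suc N}. (\<Prod>i\<in>S. if i < N then lam else \<beta>) * pattern_weight D \<Psi> (Suc N) \<rho> S)"
proof -
  let ?\<alpha> = "\<lambda>i. complex_of_real (if i < N then lam else \<beta>)"
  have "test_op \<Psi> lam N B x y = (\<Prod>i<Suc N. proj \<Psi> (x ! i) (y ! i) + ?\<alpha> i * proj_perp \<Psi> (x ! i) (y ! i))" for x y
  proof -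
    have "(\<Prod>i<N. Omega \<Psi> lam (x ! i) (y ! i)) = (\<Prod>i<N. proj \<Psi> (x ! i) (y ! i) + ?\<alpha> i * proj_perp \<Psi> (x ! i) (y ! i))"
      unfolding Omega_def proj_perp_def by (intro prod.cong) auto
    then show ?thesis unfolding test_op_def using assms by simp
  qed
  then have "test_op \<Psi> lam N B = (\<lambda>x y. \<Sum>S\<in>Pow {..<Suc N}. (\<Prod>i\<in>S. ?\<alpha> i) * pattern_proj \<Psi> (Suc N) S x y)"
    by (simp add: prod_proj_add_perp fun_eq_iff)
  then have "trAB D (Suc N) (test_op \<Psi> lam N B) \<rho>
      = trAB D (Suc N) (\<lambda>x y. \<Sum>S\<in>Pow {..<Suc N}. (\<Prod>i\<in>S. ?\<alpha> i) * pattern_proj \<Psi> (Suc N) S x y) \<rho>"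
    by simp
  also have "\<dots> = (\<Sum>S\<in>Pow {..<Suc N}. (\<Prod>i\<in>S. ?\<alpha> i) * trAB D (Suc N) (pattern_proj \<Psi> (Suc N) S) \<rho>)"
    by (simp only: trAB_sum trAB_cmult)
  finally show ?thesis unfolding pattern_weight_def by (simp add: Re_sum del: of_real_prod flip: of_real_prod)
qed

lemma p_rho_eq_sum_pattern_weight:
  "p_rho D \<Psi> lam N \<rho> = (\<Sum>S\<in>Pow {..<Suc N}. (\<Prod>i\<in>S. if i < N then lam else 1) * pattern_weight D \<Psi> (Suc N) \<rho> S)"
  unfolding p_rho_def Suc_eq_plus1[symmetric] by (rule Re_trAB_test_op) (simp add: proj_perp_def)

lemma f_rho_eq_sum_pattern_weight:
  "f_rho D \<Psi> lam N \<rho> = (\<Sum>S\<in>Pow {..<Suc N}. (\<Prod>i\<in>S. if i < N then lam else 0) * pattern_weight D \<Psi> (Suc N) \<rho> S)"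
  unfolding f_rho_def Suc_eq_plus1[symmetric] by (rule Re_trAB_test_op) simp

lemma prod_pass_coeff:
  fixes lam :: real
  assumes "S \<subseteq> {..<Suc N}"
  shows "lam * (\<Prod>i\<in>S. if i < N then lam else 1) = (if N \<in> S then lam ^ card S else lam ^ Suc (card S))"
proof -
  have "finite S" using assms finite_subset by blast
  have "(\<Prod>i\<in>S - {N}. if i < N then lam else 1) = (\<Prod>i\<in>S - {N}. lam)"
    using assms by (intro prod.cong refl) (auto simp: subset_iff less_Suc_eq)
  then have "(\<Prod>i\<in>S. if i < N then lam else 1) = lam ^ card (S - {N})"
    using \<open>finite S\<close> by (cases "N \<in> S") (simp_all add: prod.remove)
  moreover have "card S = (if N \<in> S then Suc (card (S - {N})) else card (S - {N}))"
    using \<open>finite S\<close> card_Suc_Diff1[of S N] by auto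
  ultimately show ?thesis by (metis power_Suc)
qed

lemma prod_fid_coeff:
  fixes lam :: real
  assumes "S \<subseteq> {..<Suc N}"
  shows "(\<Prod>i\<in>S. if i < N then lam else 0) = (if N \<in> S then 0 else lam ^ card S)"
proof (cases "N \<in> S")
  case True
  then show ?thesis using assms finite_subset[OF assms] by (auto intro!: bexI[of _ N])
next
  case False
  then have "(\<Prod>i\<in>S. if i < N then lam else 0) = (\<Prod>i\<in>S. lam)"
    using assms by (intro prod.cong refl) (auto simp: subset_iff less_Suc_eq)
  then show ?thesis using False by simp
qed

definition subsets_of_card :: "nat \<Rightarrow> nat \<Rightarrow> nat set set" where
  "subsets_of_card M j = {S. S \<subseteq> {..<M} \<and> card S = j}"

definition perp_count_dist :: "nat \<Rightarrow> (nat \<Rightarrow> complex) \<Rightarrow> nat \<Rightarrow> (nat list \<Rightarrow> nat list \<Rightarrow> complex) \<Rightarrow> nat \<Rightarrow> real" where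
  "perp_count_dist D \<Psi> M \<rho> j = (\<Sum>S\<in>subsets_of_card M j. pattern_weight D \<Psi> M \<rho> S)"

definition perp_count_at :: "nat \<Rightarrow> (nat \<Rightarrow> complex) \<Rightarrow> nat \<Rightarrow> (nat list \<Rightarrow> nat list \<Rightarrow> complex) \<Rightarrow> nat \<Rightarrow> nat \<Rightarrow> real" where
  "perp_count_at D \<Psi> M \<rho> i j = (\<Sum>S\<in>subsets_of_card M j. if i \<in> S then pattern_weight D \<Psi> M \<rho> S else 0)"

lemma card_subsets_of_card: "card (subsets_of_card M j) = M choose j"
  unfolding subsets_of_card_def using n_subsets[of "{..<M}" j] by simp

lemma sum_Pow_by_card:
  fixes g :: "nat set \<Rightarrow> 'a::comm_monoid_add"
  shows "(\<Sum>S\<in>Pow {..<M}. g S) = (\<Sum>j\<le>M. \<Sum>S\<in>subsets_of_card M j. g S)"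
proof -
  have "card ` Pow {..<M} \<subseteq> {..M}"
    using card_mono[OF finite_lessThan] by fastforce
  then have "(\<Sum>j\<le>M. \<Sum>S\<in>{S \<in> Pow {..<M}. card S = j}. g S) = (\<Sum>S\<in>Pow {..<M}. g S)"
    by (intro sum.group) auto
  moreover have "{S \<in> Pow {..<M}. card S = j} = subsets_of_card M j" for j
    unfolding subsets_of_card_def by auto
  ultimately show ?thesis by simp
qed

lemma perp_count_at_swap:
  assumes "perm_inv D M \<rho>" "i < M" "N < M"
  shows "perp_count_at D \<Psi> M \<rho> i j = perp_count_at D \<Psi> M \<rho> N j"
proof -
  define \<tau> where "\<tau> = Transposition.transpose i N"
  have perm: "\<tau> permutes {..<M}" unfolding \<tau>_def using assms by (intro permutes_swap_id) auto
  have invol: "\<tau> ` \<tau> ` S = S" for S by (simp add: image_image \<tau>_def)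
  have "\<tau> ` S \<in> subsets_of_card M j" if "S \<in> subsets_of_card M j" for S
    using that permutes_image[OF perm] card_image[OF inj_on_subset[OF permutes_inj[OF perm]]]
    unfolding subsets_of_card_def by auto
  then have bij: "bij_betw ((`) \<tau>) (subsets_of_card M j) (subsets_of_card M j)"
    by (intro bij_betw_byWitness[where f' = "(`) \<tau>"]) (auto simp: invol)
  have mem: "N \<in> \<tau> ` S \<longleftrightarrow> i \<in> S" for S
    using inj_image_mem_iff[OF permutes_inj[OF perm], of i S] by (simp add: \<tau>_def)
  have "perp_count_at D \<Psi> M \<rho> N j
      = (\<Sum>S\<in>subsets_of_card M j. if N \<in> \<tau> ` S then pattern_weight D \<Psi> M \<rho> (\<tau> ` S) else 0)"
    unfolding perp_count_at_def by (rule sum.reindex_bij_betw[OF bij, symmetric])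
  also have "\<dots> = perp_count_at D \<Psi> M \<rho> i j"
    unfolding perp_count_at_def mem pattern_weight_image[OF perm assms(1)] ..
  finally show ?thesis by simp
qed

text \<open>Double counting of the pairs \<open>(i, S)\<close> with \<open>i \<in> S\<close>, all positions \<open>i\<close> being
  equivalent by permutation invariance.\<close>
lemma perp_count_at_eq:
  assumes "perm_inv D M \<rho>" "N < M"
  shows "real M * perp_count_at D \<Psi> M \<rho> N j = real j * perp_count_dist D \<Psi> M \<rho> j"
proof -
  have "real j * perp_count_dist D \<Psi> M \<rho> j
      = (\<Sum>S\<in>subsets_of_card M j. \<Sum>i<M. if i \<in> S then pattern_weight D \<Psi> M \<rho> S else 0)"
    unfolding perp_count_dist_def sum_distrib_left
  proof (intro sum.cong refl)
    fix S assume "S \<in> subsets_of_card M j"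
    then have "S \<subseteq> {..<M}" "card S = j" unfolding subsets_of_card_def by auto
    then show "real j * pattern_weight D \<Psi> M \<rho> S = (\<Sum>i<M. if i \<in> S then pattern_weight D \<Psi> M \<rho> S else 0)"
      by (simp add: sum.If_cases Int_absorb1)
  qed
  also have "\<dots> = (\<Sum>i<M. perp_count_at D \<Psi> M \<rho> i j)"
    unfolding perp_count_at_def by (rule sum.swap)
  also have "\<dots> = real M * perp_count_at D \<Psi> M \<rho> N j"
    using perp_count_at_swap[OF assms(1) _ assms(2)] by simp
  finally show ?thesis by simp
qed

lemma sum_Pow_by_card_last:
  assumes "perm_inv D M \<rho>" "N < M"
  shows "real M * (\<Sum>S\<in>Pow {..<M}. (if N \<in> S then a (card S) else b (card S)) * pattern_weight D \<Psi> M \<rho> S)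
     = (\<Sum>j\<le>M. perp_count_dist D \<Psi> M \<rho> j * (real M * b j + real j * (a j - b j)))"
proof -
  have "(\<Sum>S\<in>Pow {..<M}. (if N \<in> S then a (card S) else b (card S)) * pattern_weight D \<Psi> M \<rho> S)
      = (\<Sum>j\<le>M. \<Sum>S\<in>subsets_of_card M j. b j * pattern_weight D \<Psi> M \<rho> S
           + (a j - b j) * (if N \<in> S then pattern_weight D \<Psi> M \<rho> S else 0))"
    unfolding sum_Pow_by_card by (intro sum.cong refl) (auto simp: subsets_of_card_def algebra_simps)
  also have "\<dots> = (\<Sum>j\<le>M. b j * perp_count_dist D \<Psi> M \<rho> j + (a j - b j) * perp_count_at D \<Psi> M \<rho> N j)"
    unfolding perp_count_dist_def perp_count_at_def by (simp add: sum.distrib sum_distrib_left)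
  finally have "real M * (\<Sum>S\<in>Pow {..<M}. (if N \<in> S then a (card S) else b (card S)) * pattern_weight D \<Psi> M \<rho> S)
      = (\<Sum>j\<le>M. b j * (real M * perp_count_dist D \<Psi> M \<rho> j) + (a j - b j) * (real M * perp_count_at D \<Psi> M \<rho> N j))"
    by (simp add: sum_distrib_left algebra_simps)
  also have "\<dots> = (\<Sum>j\<le>M. perp_count_dist D \<Psi> M \<rho> j * (real M * b j + real j * (a j - b j)))"
    unfolding perp_count_at_eq[OF assms] by (simp add: algebra_simps)
  finally show ?thesis .
qed

lemma prob_vector_perp_count_dist:
  assumes "0 < D" "(\<Sum>i<D. cnj (\<Psi> i) * \<Psi> i) = 1" "density_op D M \<rho>"
  shows "prob_vector M (perp_count_dist D \<Psi> M \<rho>)"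
  unfolding prob_vector_def perp_count_dist_def
  using pattern_weight_nonneg[OF assms] sum_pattern_weight[OF assms(3)]
  by (simp add: sum_nonneg flip: sum_Pow_by_card)

lemma p_rho_eq_sum_pass_weight:
  assumes "perm_inv D (Suc N) \<rho>"
  shows "real (Suc N) * lam * p_rho D \<Psi> lam N \<rho>
       = (\<Sum>j\<le>Suc N. perp_count_dist D \<Psi> (Suc N) \<rho> j * pass_weight lam (Suc N) j)"
proof -
  have "lam * p_rho D \<Psi> lam N \<rho> = (\<Sum>S\<in>Pow {..<Suc N}.
      (if N \<in> S then lam ^ card S else lam ^ Suc (card S)) * pattern_weight D \<Psi> (Suc N) \<rho> S)"
    unfolding p_rho_eq_sum_pattern_weight sum_distrib_left
    by (intro sum.cong refl) (simp add: prod_pass_coeff flip: mult.assoc)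
  then have "real (Suc N) * lam * p_rho D \<Psi> lam N \<rho> = real (Suc N) * (\<Sum>S\<in>Pow {..<Suc N}.
      (if N \<in> S then lam ^ card S else lam ^ Suc (card S)) * pattern_weight D \<Psi> (Suc N) \<rho> S)"
    by (simp add: mult.assoc)
  also have "\<dots> = (\<Sum>j\<le>Suc N. perp_count_dist D \<Psi> (Suc N) \<rho> j
      * (real (Suc N) * lam ^ Suc j + real j * (lam ^ j - lam ^ Suc j)))"
    by (rule sum_Pow_by_card_last[OF assms lessI])
  also have "\<dots> = (\<Sum>j\<le>Suc N. perp_count_dist D \<Psi> (Suc N) \<rho> j * pass_weight lam (Suc N) j)"
    by (intro sum.cong refl) (simp add: pass_weight_def algebra_simps)
  finally show ?thesis .
qed

lemma f_rho_eq_sum_fid_weight: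
  assumes "perm_inv D (Suc N) \<rho>"
  shows "real (Suc N) * lam * f_rho D \<Psi> lam N \<rho>
       = (\<Sum>j\<le>Suc N. perp_count_dist D \<Psi> (Suc N) \<rho> j * fid_weight lam (Suc N) j)"
proof -
  have "f_rho D \<Psi> lam N \<rho> = (\<Sum>S\<in>Pow {..<Suc N}.
      (if N \<in> S then 0 else lam ^ card S) * pattern_weight D \<Psi> (Suc N) \<rho> S)"
    unfolding f_rho_eq_sum_pattern_weight by (intro sum.cong refl) (simp add: prod_fid_coeff)
  then have "real (Suc N) * lam * f_rho D \<Psi> lam N \<rho> = lam * (real (Suc N) * (\<Sum>S\<in>Pow {..<Suc N}.
      (if N \<in> S then 0 else lam ^ card S) * pattern_weight D \<Psi> (Suc N) \<rho> S))"
    by simp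
  also have "\<dots> = lam * (\<Sum>j\<le>Suc N. perp_count_dist D \<Psi> (Suc N) \<rho> j
      * (real (Suc N) * lam ^ j + real j * (0 - lam ^ j)))"
    using sum_Pow_by_card_last[OF assms lessI, where a = "\<lambda>_. 0"] by simp
  also have "\<dots> = (\<Sum>j\<le>Suc N. perp_count_dist D \<Psi> (Suc N) \<rho> j * fid_weight lam (Suc N) j)"
    unfolding sum_distrib_left by (intro sum.cong refl) (simp add: fid_weight_def algebra_simps)
  finally show ?thesis .
qed

section \<open>Permutation-invariant mixtures of product states\<close>

lemma sum_lessThan_first_two:
  fixes g :: "nat \<Rightarrow> 'a::comm_monoid_add"
  assumes "2 \<le> D" "\<And>a. 2 \<le> a \<Longrightarrow> g a = 0"
  shows "(\<Sum>a<D. g a) = g 0 + g 1"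
proof -
  have "(\<Sum>a<D. g a) = (\<Sum>a\<in>{0, 1}. g a)"
    using assms by (intro sum.mono_neutral_right) auto
  then show ?thesis by simp
qed

lemma exists_orthogonal_unit_vector:
  fixes \<Psi> :: "nat \<Rightarrow> complex"
  assumes "2 \<le> D"
  shows "\<exists>\<phi>. (\<Sum>a<D. cnj (\<Psi> a) * \<phi> a) = 0 \<and> (\<Sum>a<D. cnj (\<phi> a) * \<phi> a) = 1"
proof (cases "\<Psi> 0 = 0 \<and> \<Psi> 1 = 0")
  case True
  define \<phi> where "\<phi> a = (if a = 0 then 1 else 0 :: complex)" for a :: nat
  have "(\<Sum>a<D. cnj (\<Psi> a) * \<phi> a) = 0" "(\<Sum>a<D. cnj (\<phi> a) * \<phi> a) = 1"
    using True by (subst sum_lessThan_first_two[OF assms]; simp add: \<phi>_def)+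
  then show ?thesis by blast
next
  case False
  define n where "n = complex_of_real (sqrt ((cmod (\<Psi> 0))\<^sup>2 + (cmod (\<Psi> 1))\<^sup>2))"
  have pos: "0 < (cmod (\<Psi> 0))\<^sup>2 + (cmod (\<Psi> 1))\<^sup>2"
    using False by (cases "\<Psi> 0 = 0") (auto intro: add_pos_nonneg add_nonneg_pos)
  have "n \<noteq> 0" "cnj n = n" unfolding n_def using False by simp_all
  have "n * n = of_real ((cmod (\<Psi> 0))\<^sup>2) + of_real ((cmod (\<Psi> 1))\<^sup>2)"
    unfolding n_def of_real_mult[symmetric] using pos by simp
  then have nn: "n * n = \<Psi> 0 * cnj (\<Psi> 0) + \<Psi> 1 * cnj (\<Psi> 1)" by (simp only: complex_norm_square)
  define \<phi> where "\<phi> a = (if a = 0 then - cnj (\<Psi> 1) / n else if a = 1 then cnj (\<Psi> 0) / n else 0)" for a :: nat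
  have "(\<Sum>a<D. cnj (\<Psi> a) * \<phi> a) = cnj (\<Psi> 0) * \<phi> 0 + cnj (\<Psi> 1) * \<phi> 1"
    by (rule sum_lessThan_first_two[OF assms]) (simp add: \<phi>_def)
  also have "\<dots> = 0" unfolding \<phi>_def by (simp add: field_simps)
  finally have orth: "(\<Sum>a<D. cnj (\<Psi> a) * \<phi> a) = 0" .
  have "(\<Sum>a<D. cnj (\<phi> a) * \<phi> a) = cnj (\<phi> 0) * \<phi> 0 + cnj (\<phi> 1) * \<phi> 1"
    by (rule sum_lessThan_first_two[OF assms]) (simp add: \<phi>_def)
  also have "\<dots> = (\<Psi> 0 * cnj (\<Psi> 0) + \<Psi> 1 * cnj (\<Psi> 1)) / (n * n)"
    unfolding \<phi>_def using \<open>cnj n = n\<close> by (simp add: add_divide_distrib)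
  also have "\<dots> = 1" unfolding nn[symmetric] using \<open>n \<noteq> 0\<close> by simp
  finally show ?thesis using orth by blast
qed

lemma proj_expectation:
  "(\<Sum>a<D. \<Sum>b<D. proj \<Psi> a b * u b * cnj (u a)) = (\<Sum>a<D. \<Psi> a * cnj (u a)) * (\<Sum>b<D. cnj (\<Psi> b) * u b)"
  unfolding proj_def by (simp add: sum_product algebra_simps)

lemma proj_perp_expectation:
  "(\<Sum>a<D. \<Sum>b<D. proj_perp \<Psi> a b * u b * cnj (u a))
     = (\<Sum>a<D. cnj (u a) * u a) - (\<Sum>a<D. \<Psi> a * cnj (u a)) * (\<Sum>b<D. cnj (\<Psi> b) * u b)"
proof -
  have "(\<Sum>a<D. \<Sum>b<D. proj_perp \<Psi> a b * u b * cnj (u a))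
      = (\<Sum>a<D. (\<Sum>b<D. if a = b then u b * cnj (u a) else 0) - (\<Sum>b<D. proj \<Psi> a b * u b * cnj (u a)))"
    unfolding proj_perp_def sum_subtractf[symmetric] by (intro sum.cong refl) (simp add: algebra_simps)
  also have "\<dots> = (\<Sum>a<D. cnj (u a) * u a) - (\<Sum>a<D. \<Sum>b<D. proj \<Psi> a b * u b * cnj (u a))"
    by (simp add: sum_subtractf mult.commute)
  finally show ?thesis unfolding proj_expectation .
qed

lemma proj_choice_expectation:
  assumes "(\<Sum>a<D. cnj (\<Psi> a) * \<Psi> a) = 1" "(\<Sum>a<D. cnj (\<phi> a) * \<phi> a) = 1"
    "(\<Sum>a<D. cnj (\<Psi> a) * \<phi> a) = 0"
  shows "(\<Sum>a<D. \<Sum>b<D. (if b1 then proj_perp \<Psi> else proj \<Psi>) a b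
            * (if b2 then \<phi> else \<Psi>) b * cnj ((if b2 then \<phi> else \<Psi>) a))
       = (if b1 = b2 then 1 else 0)"
proof -
  have "(\<Sum>a<D. \<Psi> a * cnj (\<Psi> a)) = 1" using assms(1) by (simp add: mult.commute)
  moreover have "(\<Sum>a<D. \<Psi> a * cnj (\<phi> a)) = 0"
    using arg_cong[OF assms(3), of cnj] by simp
  ultimately show ?thesis
    using assms by (cases b1; cases b2) (simp_all add: proj_expectation proj_perp_expectation)
qed

definition pattern_state :: "(nat \<Rightarrow> complex) \<Rightarrow> (nat \<Rightarrow> complex) \<Rightarrow> nat \<Rightarrow> nat set \<Rightarrow> nat list \<Rightarrow> complex" where
  "pattern_state \<Psi> \<phi> M S x = (\<Prod>i<M. (if i \<in> S then \<phi> else \<Psi>) (x ! i))"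

text \<open>The mixture, with weight \<open>c j / (M choose j)\<close> on each pattern of \<open>j\<close> factors \<open>\<phi> \<bottom> \<Psi>\<close>, realises
  \<open>c\<close> as the distribution \<^const>\<open>perp_count_dist\<close> of a permutation-invariant state.\<close>
definition symmetric_mixture :: "(nat \<Rightarrow> complex) \<Rightarrow> (nat \<Rightarrow> complex) \<Rightarrow> nat \<Rightarrow> (nat \<Rightarrow> real)
    \<Rightarrow> nat list \<Rightarrow> nat list \<Rightarrow> complex" where
  "symmetric_mixture \<Psi> \<phi> M c x y = (\<Sum>S\<in>Pow {..<M}.
     complex_of_real (c (card S) / real (M choose card S)) * pattern_state \<Psi> \<phi> M S x * cnj (pattern_state \<Psi> \<phi> M S y))"

lemma sum_mixture_weights:
  assumes "(\<Sum>j\<le>M. c j) = 1"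
  shows "(\<Sum>S\<in>Pow {..<M}. c (card S) / real (M choose card S)) = 1"
proof -
  have "(\<Sum>S\<in>subsets_of_card M j. c (card S) / real (M choose card S)) = c j" if "j \<le> M" for j
  proof -
    have "(\<Sum>S\<in>subsets_of_card M j. c (card S) / real (M choose card S)) = (\<Sum>S\<in>subsets_of_card M j. c j / real (M choose j))"
      unfolding subsets_of_card_def by (intro sum.cong) auto
    then show ?thesis using that by (simp add: card_subsets_of_card)
  qed
  then show ?thesis using assms by (simp add: sum_Pow_by_card)
qed

lemma density_op_mixture:
  assumes "\<And>S. S \<in> A \<Longrightarrow> 0 \<le> w S" "(\<Sum>S\<in>A. w S) = 1"
    and "\<And>S. S \<in> A \<Longrightarrow> (\<Sum>x\<in>idx D M. u S x * cnj (u S x)) = 1"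
  shows "density_op D M (\<lambda>x y. \<Sum>S\<in>A. complex_of_real (w S) * u S x * cnj (u S y))"
  unfolding density_op_def
proof (intro conjI allI)
  fix v :: "nat list \<Rightarrow> complex"
  let ?z = "\<lambda>S. \<Sum>x\<in>idx D M. cnj (v x) * u S x"
  have "(\<Sum>x\<in>idx D M. \<Sum>y\<in>idx D M. cnj (v x) * (\<Sum>S\<in>A. complex_of_real (w S) * u S x * cnj (u S y)) * v y)
      = (\<Sum>x\<in>idx D M. \<Sum>y\<in>idx D M. \<Sum>S\<in>A. complex_of_real (w S) * ((cnj (v x) * u S x) * (cnj (u S y) * v y)))"
    by (simp add: sum_distrib_left sum_distrib_right algebra_simps)
  also have "\<dots> = (\<Sum>S\<in>A. \<Sum>x\<in>idx D M. \<Sum>y\<in>idx D M. complex_of_real (w S) * ((cnj (v x) * u S x) * (cnj (u S y) * v y)))"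
    by (subst sum.swap) (simp add: sum.swap[of _ "idx D M" A])
  also have "\<dots> = (\<Sum>S\<in>A. complex_of_real (w S) * (?z S * cnj (?z S)))"
    by (simp add: sum_product[symmetric] sum_distrib_left mult.commute)
  also have "\<dots> = (\<Sum>S\<in>A. complex_of_real (w S * (cmod (?z S))\<^sup>2))"
    by (simp only: of_real_mult complex_norm_square)
  finally have quad: "(\<Sum>x\<in>idx D M. \<Sum>y\<in>idx D M. cnj (v x) * (\<Sum>S\<in>A. complex_of_real (w S) * u S x * cnj (u S y)) * v y)
      = complex_of_real (\<Sum>S\<in>A. w S * (cmod (?z S))\<^sup>2)" by simp
  show "(\<Sum>x\<in>idx D M. \<Sum>y\<in>idx D M. cnj (v x) * (\<Sum>S\<in>A. complex_of_real (w S) * u S x * cnj (u S y)) * v y) \<in> \<real>"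
    "0 \<le> Re (\<Sum>x\<in>idx D M. \<Sum>y\<in>idx D M. cnj (v x) * (\<Sum>S\<in>A. complex_of_real (w S) * u S x * cnj (u S y)) * v y)"
    unfolding quad using assms(1) by (auto intro!: sum_nonneg)
next
  have "(\<Sum>x\<in>idx D M. \<Sum>S\<in>A. complex_of_real (w S) * u S x * cnj (u S x))
      = (\<Sum>S\<in>A. complex_of_real (w S) * (\<Sum>x\<in>idx D M. u S x * cnj (u S x)))"
    by (simp add: sum_distrib_left mult.assoc sum.swap[of _ "idx D M"])
  also have "\<dots> = complex_of_real (\<Sum>S\<in>A. w S)" using assms(3) by simp
  finally show "(\<Sum>x\<in>idx D M. \<Sum>S\<in>A. complex_of_real (w S) * u S x * cnj (u S x)) = 1"
    using assms(2) by simp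
qed

lemma norm_pattern_state:
  assumes "(\<Sum>a<D. cnj (\<Psi> a) * \<Psi> a) = 1" "(\<Sum>a<D. cnj (\<phi> a) * \<phi> a) = 1"
  shows "(\<Sum>x\<in>idx D M. pattern_state \<Psi> \<phi> M S x * cnj (pattern_state \<Psi> \<phi> M S x)) = 1"
proof -
  have "(\<Sum>x\<in>idx D M. pattern_state \<Psi> \<phi> M S x * cnj (pattern_state \<Psi> \<phi> M S x))
      = (\<Sum>x\<in>idx D M. \<Prod>i<M. (if i \<in> S then \<phi> else \<Psi>) (x ! i) * cnj ((if i \<in> S then \<phi> else \<Psi>) (x ! i)))"
    unfolding pattern_state_def by (simp add: prod.distrib)
  also have "\<dots> = (\<Prod>i<M. \<Sum>a<D. (if i \<in> S then \<phi> else \<Psi>) a * cnj ((if i \<in> S then \<phi> else \<Psi>) a))"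
    by (rule sum_idx_prod)
  also have "\<dots> = 1" using assms by (intro prod.neutral) (auto simp: mult.commute)
  finally show ?thesis .
qed

lemma density_op_symmetric_mixture:
  assumes "prob_vector M c" "(\<Sum>a<D. cnj (\<Psi> a) * \<Psi> a) = 1" "(\<Sum>a<D. cnj (\<phi> a) * \<phi> a) = 1"
  shows "density_op D M (symmetric_mixture \<Psi> \<phi> M c)"
  unfolding symmetric_mixture_def
proof (rule density_op_mixture)
  show "0 \<le> c (card S) / real (M choose card S)" if "S \<in> Pow {..<M}" for S
    using assms(1) card_mono[of "{..<M}" S] that unfolding prob_vector_def by simp
  show "(\<Sum>S\<in>Pow {..<M}. c (card S) / real (M choose card S)) = 1"
    using sum_mixture_weights assms(1) unfolding prob_vector_def by simp
qed (rule norm_pattern_state[OF assms(2,3)])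

lemma perm_inv_symmetric_mixture: "perm_inv D M (symmetric_mixture \<Psi> \<phi> M c)"
  unfolding perm_inv_def
proof (intro allI impI ballI)
  fix \<sigma> x y assume \<sigma>: "\<sigma> permutes {..<M}"
  have state: "pattern_state \<Psi> \<phi> M S (perm_idx M \<sigma> z) = pattern_state \<Psi> \<phi> M (\<sigma> ` S) z" for S z
  proof -
    have "pattern_state \<Psi> \<phi> M S (perm_idx M \<sigma> z) = (\<Prod>k<M. (if k \<in> S then \<phi> else \<Psi>) (z ! \<sigma> k))"
      unfolding pattern_state_def by (intro prod.cong) (auto simp: perm_idx_nth)
    then show ?thesis
      unfolding pattern_state_def using prod_permutes_reindex[OF \<sigma>, of "\<lambda>b j. (if b then \<phi> else \<Psi>) (z ! j)"] by simp
  qed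
  have card: "card (\<sigma> ` S) = card S" for S
    using permutes_inj[OF \<sigma>] by (simp add: card_image inj_on_subset)
  have bij: "bij_betw ((`) \<sigma>) (Pow {..<M}) (Pow {..<M})"
  proof (rule bij_betw_byWitness[where f' = "(`) (inv \<sigma>)"])
    show "\<forall>S\<in>Pow {..<M}. inv \<sigma> ` \<sigma> ` S = S" "\<forall>S\<in>Pow {..<M}. \<sigma> ` inv \<sigma> ` S = S"
      using permutes_inverses[OF \<sigma>] by (simp_all add: image_image)
    show "(`) \<sigma> ` Pow {..<M} \<subseteq> Pow {..<M}" "(`) (inv \<sigma>) ` Pow {..<M} \<subseteq> Pow {..<M}"
      using permutes_in_image[OF \<sigma>] permutes_in_image[OF permutes_inv[OF \<sigma>]]
      by (auto simp: subset_iff simp flip: lessThan_iff)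
  qed
  show "symmetric_mixture \<Psi> \<phi> M c (perm_idx M \<sigma> x) (perm_idx M \<sigma> y) = symmetric_mixture \<Psi> \<phi> M c x y"
    unfolding symmetric_mixture_def state
    using sum.reindex_bij_betw[OF bij, of "\<lambda>T. complex_of_real (c (card T) / real (M choose card T))
      * pattern_state \<Psi> \<phi> M T x * cnj (pattern_state \<Psi> \<phi> M T y)"] by (simp add: card)
qed

lemma pattern_weight_symmetric_mixture:
  assumes "(\<Sum>a<D. cnj (\<Psi> a) * \<Psi> a) = 1" "(\<Sum>a<D. cnj (\<phi> a) * \<phi> a) = 1"
    "(\<Sum>a<D. cnj (\<Psi> a) * \<phi> a) = 0" "T \<subseteq> {..<M}"
  shows "pattern_weight D \<Psi> M (symmetric_mixture \<Psi> \<phi> M c) T = c (card T) / real (M choose card T)"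
proof -
  let ?w = "\<lambda>S. complex_of_real (c (card S) / real (M choose card S))"
  let ?U = "\<lambda>S i. if i \<in> S then \<phi> else \<Psi>"
  have factor: "(\<Sum>x\<in>idx D M. \<Sum>y\<in>idx D M. pattern_proj \<Psi> M T x y
        * (pattern_state \<Psi> \<phi> M S y * cnj (pattern_state \<Psi> \<phi> M S x))) = (if S = T then 1 else 0)"
    if "S \<subseteq> {..<M}" for S
  proof -
    have "(\<Sum>x\<in>idx D M. \<Sum>y\<in>idx D M. pattern_proj \<Psi> M T x y
        * (pattern_state \<Psi> \<phi> M S y * cnj (pattern_state \<Psi> \<phi> M S x)))
        = (\<Sum>x\<in>idx D M. \<Sum>y\<in>idx D M. \<Prod>i<M. (if i \<in> T then proj_perp \<Psi> else proj \<Psi>) (x ! i) (y ! i)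
            * ?U S i (y ! i) * cnj (?U S i (x ! i)))"
      unfolding pattern_proj_def pattern_state_def by (simp add: prod.distrib mult.assoc)
    also have "\<dots> = (\<Prod>i<M. \<Sum>a<D. \<Sum>b<D. (if i \<in> T then proj_perp \<Psi> else proj \<Psi>) a b * ?U S i b * cnj (?U S i a))"
      by (rule sum_idx_idx_prod)
    also have "\<dots> = (\<Prod>i<M. if (i \<in> T) = (i \<in> S) then 1 else 0)"
      using proj_choice_expectation[OF assms(1-3)] by simp
    also have "\<dots> = (if S = T then 1 else 0)"
      using that assms(4) by (auto simp: prod_zero_iff)
    finally show ?thesis .
  qed
  have "trAB D M (pattern_proj \<Psi> M T) (symmetric_mixture \<Psi> \<phi> M c)
      = (\<Sum>S\<in>Pow {..<M}. ?w S * (\<Sum>x\<in>idx D M. \<Sum>y\<in>idx D M.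
          pattern_proj \<Psi> M T x y * (pattern_state \<Psi> \<phi> M S y * cnj (pattern_state \<Psi> \<phi> M S x))))"
    unfolding trAB_def symmetric_mixture_def
    by (simp add: sum_distrib_left sum_distrib_right algebra_simps sum.swap[of _ "Pow {..<M}"])
  also have "\<dots> = (\<Sum>S\<in>Pow {..<M}. if S = T then ?w S else 0)"
    by (intro sum.cong refl) (simp add: factor)
  also have "\<dots> = ?w T" using assms(4) by simp
  finally show ?thesis unfolding pattern_weight_def by simp
qed

lemma perp_count_dist_symmetric_mixture:
  assumes "(\<Sum>a<D. cnj (\<Psi> a) * \<Psi> a) = 1" "(\<Sum>a<D. cnj (\<phi> a) * \<phi> a) = 1"
    "(\<Sum>a<D. cnj (\<Psi> a) * \<phi> a) = 0" "j \<le> M"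
  shows "perp_count_dist D \<Psi> M (symmetric_mixture \<Psi> \<phi> M c) j = c j"
proof -
  have "perp_count_dist D \<Psi> M (symmetric_mixture \<Psi> \<phi> M c) j = (\<Sum>S\<in>subsets_of_card M j. c j / real (M choose j))"
    unfolding perp_count_dist_def
    by (intro sum.cong refl) (auto simp: subsets_of_card_def pattern_weight_symmetric_mixture[OF assms(1-3)])
  then show ?thesis using assms(4) by (simp add: card_subsets_of_card)
qed

section \<open>The number of tests\<close>

lemma realize_perp_count_dist:
  assumes "2 \<le> D" "(\<Sum>a<D. cnj (\<Psi> a) * \<Psi> a) = 1" "prob_vector M c"
  obtains \<rho> where "density_op D M \<rho>" "perm_inv D M \<rho>" "\<And>j. j \<le> M \<Longrightarrow> perp_count_dist D \<Psi> M \<rho> j = c j"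
proof -
  obtain \<phi> where "(\<Sum>a<D. cnj (\<Psi> a) * \<phi> a) = 0" "(\<Sum>a<D. cnj (\<phi> a) * \<phi> a) = 1"
    using exists_orthogonal_unit_vector[OF assms(1)] by blast
  then show ?thesis
    using that density_op_symmetric_mixture[OF assms(3,2)] perm_inv_symmetric_mixture
      perp_count_dist_symmetric_mixture[OF assms(2)] by blast
qed

lemma p_rho_f_rho_classical:
  assumes "0 < D" "(\<Sum>a<D. cnj (\<Psi> a) * \<Psi> a) = 1" "density_op D (Suc N) \<rho>" "perm_inv D (Suc N) \<rho>"
    and "0 < lam"
  defines "c \<equiv> perp_count_dist D \<Psi> (Suc N) \<rho>"
  shows "prob_vector (Suc N) c"
    and "\<delta> \<le> p_rho D \<Psi> lam N \<rho> \<longleftrightarrow> real (Suc N) * lam * \<delta> \<le> (\<Sum>j\<le>Suc N. c j * pass_weight lam (Suc N) j)"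
    and "(1 - \<epsilon>) * p_rho D \<Psi> lam N \<rho> \<le> f_rho D \<Psi> lam N \<rho>
         \<longleftrightarrow> 0 \<le> (\<Sum>j\<le>Suc N. c j * margin_weight \<epsilon> lam (Suc N) j)"
    and "0 \<le> f_rho D \<Psi> lam N \<rho>"
proof -
  show c: "prob_vector (Suc N) c" unfolding c_def by (rule prob_vector_perp_count_dist[OF assms(1-3)])
  have pos: "0 < real (Suc N) * lam" using assms by simp
  note p = p_rho_eq_sum_pass_weight[OF assms(4), where \<Psi> = \<Psi> and lam = lam, folded c_def]
  note f = f_rho_eq_sum_fid_weight[OF assms(4), where \<Psi> = \<Psi> and lam = lam, folded c_def]
  show "\<delta> \<le> p_rho D \<Psi> lam N \<rho> \<longleftrightarrow> real (Suc N) * lam * \<delta> \<le> (\<Sum>j\<le>Suc N. c j * pass_weight lam (Suc N) j)"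
    unfolding p[symmetric] mult_le_cancel_left_pos[OF pos] ..
  have "(\<Sum>j\<le>Suc N. c j * margin_weight \<epsilon> lam (Suc N) j)
      = real (Suc N) * lam * (f_rho D \<Psi> lam N \<rho> - (1 - \<epsilon>) * p_rho D \<Psi> lam N \<rho>)"
  proof -
    have "(\<Sum>j\<le>Suc N. c j * margin_weight \<epsilon> lam (Suc N) j)
        = (\<Sum>j\<le>Suc N. c j * fid_weight lam (Suc N) j) - (1 - \<epsilon>) * (\<Sum>j\<le>Suc N. c j * pass_weight lam (Suc N) j)"
      unfolding margin_weight_def sum_distrib_left sum_subtractf[symmetric]
      by (intro sum.cong refl) (simp add: algebra_simps)
    then show ?thesis unfolding p[symmetric] f[symmetric] by (simp add: algebra_simps)
  qed
  then show "(1 - \<epsilon>) * p_rho D \<Psi> lam N \<rho> \<le> f_rho D \<Psi> lam N \<rho>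
      \<longleftrightarrow> 0 \<le> (\<Sum>j\<le>Suc N. c j * margin_weight \<epsilon> lam (Suc N) j)"
    using mult_le_cancel_left_pos[OF pos, of 0] by simp
  have "0 \<le> (\<Sum>j\<le>Suc N. c j * fid_weight lam (Suc N) j)"
    using c assms(5) unfolding prob_vector_def fid_weight_def by (intro sum_nonneg mult_nonneg_nonneg) auto
  then show "0 \<le> f_rho D \<Psi> lam N \<rho>" unfolding f[symmetric] using mult_le_cancel_left_pos[OF pos, of 0] by simp
qed

lemma exists_feasible_state:
  assumes "2 \<le> D" "(\<Sum>a<D. cnj (\<Psi> a) * \<Psi> a) = 1" "\<delta> \<le> 1" "0 < lam"
  shows "\<exists>\<rho>. density_op D (Suc N) \<rho> \<and> perm_inv D (Suc N) \<rho> \<and> \<delta> \<le> p_rho D \<Psi> lam N \<rho>"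
proof -
  define c where "c j = (of_bool (j = 0) :: real)" for j :: nat
  have "prob_vector (Suc N) c" unfolding prob_vector_def c_def by simp
  then obtain \<rho> where \<rho>: "density_op D (Suc N) \<rho>" "perm_inv D (Suc N) \<rho>"
    and c: "\<And>j. j \<le> Suc N \<Longrightarrow> perp_count_dist D \<Psi> (Suc N) \<rho> j = c j"
    using realize_perp_count_dist[OF assms(1,2)] by blast
  have "(\<Sum>j\<le>Suc N. perp_count_dist D \<Psi> (Suc N) \<rho> j * pass_weight lam (Suc N) j) = (\<Sum>j\<le>Suc N. c j * pass_weight lam (Suc N) j)"
    using c by simp
  also have "\<dots> = real (Suc N) * lam" unfolding c_def by (simp add: pass_weight_def Int_absorb1)
  finally have "real (Suc N) * lam * \<delta> \<le> (\<Sum>j\<le>Suc N. perp_count_dist D \<Psi> (Suc N) \<rho> j * pass_weight lam (Suc N) j)"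
    using assms by (simp add: mult_left_le)
  then show ?thesis
    using \<rho> p_rho_f_rho_classical(2)[OF _ assms(2) \<rho> assms(4)] assms(1) by auto
qed

lemma all_states_iff_all_prob_vectors:
  assumes "2 \<le> D" "(\<Sum>a<D. cnj (\<Psi> a) * \<Psi> a) = 1"
  shows "(\<forall>\<rho>. density_op D M \<rho> \<and> perm_inv D M \<rho> \<and> X \<le> (\<Sum>j\<le>M. perp_count_dist D \<Psi> M \<rho> j * g j)
            \<longrightarrow> Y \<le> (\<Sum>j\<le>M. perp_count_dist D \<Psi> M \<rho> j * h j))
     \<longleftrightarrow> (\<forall>c. prob_vector M c \<and> X \<le> (\<Sum>j\<le>M. c j * g j) \<longrightarrow> Y \<le> (\<Sum>j\<le>M. c j * h j))"
    (is "?states \<longleftrightarrow> ?dists")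
proof
  assume ?states
  show ?dists
  proof (intro allI impI)
    fix c assume c: "prob_vector M c \<and> X \<le> (\<Sum>j\<le>M. c j * g j)"
    then obtain \<rho> where \<rho>: "density_op D M \<rho>" "perm_inv D M \<rho>"
      and dist: "\<And>j. j \<le> M \<Longrightarrow> perp_count_dist D \<Psi> M \<rho> j = c j"
      using realize_perp_count_dist[OF assms] by blast
    have "(\<Sum>j\<le>M. perp_count_dist D \<Psi> M \<rho> j * f j) = (\<Sum>j\<le>M. c j * f j)" for f :: "nat \<Rightarrow> real"
      using dist by (intro sum.cong) auto
    then show "Y \<le> (\<Sum>j\<le>M. c j * h j)" using \<open>?states\<close> \<rho> c by metis
  qed
next
  have "0 < D" using assms(1) by simp
  then show "?dists \<Longrightarrow> ?states" using prob_vector_perp_count_dist[OF _ assms(2)] by blast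
qed

lemma Fver_ge_iff_margin:
  assumes "2 \<le> D" "(\<Sum>i<D. (cmod (\<Psi> i))\<^sup>2) = 1" "0 < \<delta>" "\<delta> \<le> 1" "0 < lam"
  shows "1 - \<epsilon> \<le> Fver D \<Psi> N \<delta> lam \<longleftrightarrow>
    (\<forall>c. prob_vector (Suc N) c \<and> real (Suc N) * lam * \<delta> \<le> (\<Sum>j\<le>Suc N. c j * pass_weight lam (Suc N) j)
       \<longrightarrow> 0 \<le> (\<Sum>j\<le>Suc N. c j * margin_weight \<epsilon> lam (Suc N) j))"
proof -
  have D: "0 < D" using assms(1) by simp
  have unit: "(\<Sum>a<D. cnj (\<Psi> a) * \<Psi> a) = 1" using assms(2) by (simp add: sum_cnj_mult_self)
  note classical = p_rho_f_rho_classical[OF D unit _ _ assms(5)]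
  define feasible where "feasible \<rho> \<longleftrightarrow> density_op D (Suc N) \<rho> \<and> perm_inv D (Suc N) \<rho> \<and> \<delta> \<le> p_rho D \<Psi> lam N \<rho>"
    for \<rho>
  define F where "F = {f_rho D \<Psi> lam N \<rho> / p_rho D \<Psi> lam N \<rho> | \<rho>. feasible \<rho>}"
  have "F \<noteq> {}" using exists_feasible_state[OF assms(1) unit assms(4,5)] unfolding F_def feasible_def by blast
  moreover have "bdd_below F"
    unfolding F_def feasible_def using classical(4) assms(3) by (intro bdd_belowI[of _ 0]) auto
  moreover have "Fver D \<Psi> N \<delta> lam = Inf F" unfolding Fver_def F_def feasible_def by simp
  ultimately have "1 - \<epsilon> \<le> Fver D \<Psi> N \<delta> lam \<longleftrightarrow> (\<forall>s\<in>F. 1 - \<epsilon> \<le> s)"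
    by (simp add: le_cInf_iff)
  also have "\<dots> \<longleftrightarrow> (\<forall>\<rho>. feasible \<rho> \<longrightarrow> (1 - \<epsilon>) * p_rho D \<Psi> lam N \<rho> \<le> f_rho D \<Psi> lam N \<rho>)"
    unfolding F_def feasible_def using assms(3) by (auto simp: le_divide_eq)
  also have "\<dots> \<longleftrightarrow> (\<forall>\<rho>. density_op D (Suc N) \<rho> \<and> perm_inv D (Suc N) \<rho>
      \<and> real (Suc N) * lam * \<delta> \<le> (\<Sum>j\<le>Suc N. perp_count_dist D \<Psi> (Suc N) \<rho> j * pass_weight lam (Suc N) j)
      \<longrightarrow> 0 \<le> (\<Sum>j\<le>Suc N. perp_count_dist D \<Psi> (Suc N) \<rho> j * margin_weight \<epsilon> lam (Suc N) j))"
    unfolding feasible_def using classical(2,3) by blast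
  finally show ?thesis unfolding all_states_iff_all_prob_vectors[OF assms(1) unit] .
qed

lemma Fver_ge_iff_Ntil:
  assumes "2 \<le> D" "(\<Sum>i<D. (cmod (\<Psi> i))\<^sup>2) = 1"
    and "0 < \<epsilon>" "\<epsilon> < 1" "0 < \<delta>" "\<delta> < 1" "0 < lam" "lam < 1" "1 \<le> N"
  shows "1 - \<epsilon> \<le> Fver D \<Psi> N \<delta> lam \<longleftrightarrow> (\<exists>k. Ntil \<epsilon> \<delta> lam k \<le> real N)"
proof -
  have X: "0 < real (Suc N) * lam * \<delta>" "real (Suc N) * lam * \<delta> \<le> real (Suc N) * lam"
    using assms by (simp_all add: mult_left_le)
  have "2 \<le> Suc N" using assms(9) by simp
  have "1 - \<epsilon> \<le> Fver D \<Psi> N \<delta> lam \<longleftrightarrow>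
    (\<forall>c. prob_vector (Suc N) c \<and> real (Suc N) * lam * \<delta> \<le> (\<Sum>j\<le>Suc N. c j * pass_weight lam (Suc N) j)
       \<longrightarrow> 0 \<le> (\<Sum>j\<le>Suc N. c j * margin_weight \<epsilon> lam (Suc N) j))"
    using assms by (intro Fver_ge_iff_margin) auto
  also have "\<dots> \<longleftrightarrow> (\<exists>k. 0 \<le> chord_value \<epsilon> lam (Suc N) (real (Suc N) * lam * \<delta>) k)"
    using assms \<open>2 \<le> Suc N\<close> X by (intro margin_nonneg_iff_chord) auto
  also have "\<dots> \<longleftrightarrow> (\<exists>k. Ntil \<epsilon> \<delta> lam k \<le> real N)"
    using chord_value_nonneg_iff[OF assms(3,5,7,8)] by blast
  finally show ?thesis .
qed

lemma Least_ge_eq_ceiling: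
  fixes x :: real
  assumes "0 < x" and P: "\<And>n. 1 \<le> n \<Longrightarrow> P n \<longleftrightarrow> x \<le> real n"
  shows "\<exists>n\<ge>1. P n" "int (LEAST n. 1 \<le> n \<and> P n) = \<lceil>x\<rceil>"
proof -
  define n0 where "n0 = nat \<lceil>x\<rceil>"
  have n0: "int n0 = \<lceil>x\<rceil>" "1 \<le> n0" unfolding n0_def using \<open>0 < x\<close> by (auto simp: le_nat_iff)
  moreover have "x \<le> real n0" using n0(1) by (metis le_of_int_ceiling of_int_of_nat_eq)
  ultimately have "P n0" using P by blast
  then show "\<exists>n\<ge>1. P n" using n0 by blast
  have "(LEAST n. 1 \<le> n \<and> P n) = n0"
  proof (rule Least_equality)
    show "1 \<le> n0 \<and> P n0" using n0 \<open>P n0\<close> by simp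
    fix n assume "1 \<le> n \<and> P n"
    then have "x \<le> real n" using P by blast
    then have "\<lceil>x\<rceil> \<le> int n" by (simp add: ceiling_le_iff)
    then show "n0 \<le> n" using n0 by simp
  qed
  then show "int (LEAST n. 1 \<le> n \<and> P n) = \<lceil>x\<rceil>" using n0 by simp
qed

theorem theorem2:
  fixes D :: nat and \<Psi> :: "nat \<Rightarrow> complex" and \<epsilon> \<delta> lam :: real
  assumes "D \<ge> 2" and "(\<Sum>i<D. (cmod (\<Psi> i))\<^sup>2) = 1"
    and "0 < \<epsilon>" "\<epsilon> < 1" "0 < \<delta>" "\<delta> < 1" "0 < lam" "lam < 1"
  defines "kp \<equiv> nat \<lceil>log lam \<delta>\<rceil>"
    and "km \<equiv> nat \<lfloor>log lam \<delta>\<rfloor>"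
    and "kstar \<equiv> (GREATEST k::nat. \<delta> \<le> lam ^ k / ((1 - \<epsilon>) + lam * \<epsilon>))"
  shows "(\<exists>N\<ge>1. Fver D \<Psi> N \<delta> lam \<ge> 1 - \<epsilon>)
    \<and> int (Nver D \<Psi> \<epsilon> \<delta> lam) = \<lceil>INF k. Ntil \<epsilon> \<delta> lam k\<rceil>
    \<and> int (Nver D \<Psi> \<epsilon> \<delta> lam) = \<lceil>Ntil \<epsilon> \<delta> lam kstar\<rceil>
    \<and> int (Nver D \<Psi> \<epsilon> \<delta> lam) = \<lceil>min (Ntil \<epsilon> \<delta> lam kp) (Ntil \<epsilon> \<delta> lam km)\<rceil>
    \<and> (\<delta> \<ge> lam ^ kp / ((1 - \<epsilon>) + lam * \<epsilon>) \<longrightarrow> int (Nver D \<Psi> \<epsilon> \<delta> lam) = \<lceil>Ntil \<epsilon> \<delta> lam km\<rceil>)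
    \<and> (\<delta> \<le> lam ^ kp / ((1 - \<epsilon>) + lam * \<epsilon>) \<longrightarrow> int (Nver D \<Psi> \<epsilon> \<delta> lam) = \<lceil>Ntil \<epsilon> \<delta> lam kp\<rceil>)
    \<and> (\<forall>k::int. \<delta> \<le> lam powr (real_of_int k) / ((1 - \<epsilon>) + lam * \<epsilon>) \<longrightarrow> k \<le> int kstar)
    \<and> (kstar = kp \<or> kstar = km)"
proof -
  have kstar: "kstar = opt_index \<epsilon> \<delta> lam" unfolding kstar_def opt_index_def ..
  have "1 - \<epsilon> \<le> Fver D \<Psi> N \<delta> lam \<longleftrightarrow> Ntil \<epsilon> \<delta> lam kstar \<le> real N" if "1 \<le> N" for N
    using Fver_ge_iff_Ntil[OF assms(1-8) that] Ntil_opt_index_le[OF assms(3-8)] order_trans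
    unfolding kstar by blast
  note Nver = Least_ge_eq_ceiling[OF Ntil_opt_index_pos[OF assms(3-8), folded kstar] this, folded Nver_def]
  show ?thesis
    unfolding kp_def km_def
    using Nver INF_Ntil[OF assms(3-8)] min_Ntil_log_eq[OF assms(3-8)]
      Ntil_floor_log_eq_opt_index[OF assms(3-8)] opt_index_eq_ceiling_log[OF assms(3-8)]
      int_le_opt_index[OF assms(3-8)] opt_index_cases[OF assms(3-8)]
    unfolding kstar by auto
qed

end
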